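(* Let $$p=\Big(\mathbf X^{\lambda_0^{(1)}}-\mathbf X^{\lambda_1^{(1)}}\Big)\Big(\mathbf X^{\lambda_0^{(2)}}-\mathbf X^{\lambda_1^{(2)}}\Big)\cdots\Big(\mathbf X^{\lambda_0^{(k)}}-\mathbf X^{\lambda_1^{(k)}}\Big)\sum_{j\in J}e_j\mathbf X^{\alpha_j}\in\mathbb Z[X_1,\dots,X_n],$$ where the polynomials $\mathbf X^{\lambda_0^{(i)}}-\mathbf X^{\lambda_1^{(i)}}$ ($i=1,\dots,k$) are pairwise distinct irreducible polynomials, all $\lambda_b^{(i)}$ ($b\in\{0,1\}$) are nonzero elements of $\mathbb N_0^n$, $J$ is a finite nonempty index set, $e_j\in\{1,-1\}$ and $\alpha_j\in\mathbb N_0^n$ for $j\in J$, and $\alpha_j\ne\alpha_{j'}$ whenever $e_j\ne e_{j'}$. Then $p$ contains at least $k+1$ minimal monomials.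
   Context: $\mathbb N_0$ denotes the nonnegative integers; for $\alpha\in\mathbb N_0^n$, $\mathbf X^\alpha=\prod_{i=1}^nX_i^{(\alpha)_i}$. Write a nonzero polynomial $p\in\mathbb Z[X_1,\dots,X_n]$ as $p=\sum_{\beta}c_\beta\mathbf X^\beta$ with integer coefficients; a monomial $\mathbf X^\beta$ with $c_\beta\neq 0$ is minimal in $p$ if there is no $\beta'\ne\beta$ with $c_{\beta'}\ne0$ and $\beta'\le\beta$ in the componentwise (product) order on $\mathbb N_0^n$. The number of minimal monomials of $p$ is the number of such exponent vectors $\beta$. *)

theory Defs
  imports "HOL-Library.Poly_Mapping" "HOL-Computational_Algebra.Factorial_Ring"
begin

text \<open>Polynomials in \<open>\<int>[X_i : i \<in> 'n]\<close> with a finite index type 'n (so n = CARD('n)):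
  exponent vectors are \<open>'n \<Rightarrow>\<^sub>0 nat\<close>, polynomials are \<open>('n \<Rightarrow>\<^sub>0 nat) \<Rightarrow>\<^sub>0 int\<close>.
  The monomial X^alpha is \<open>Poly_Mapping.single alpha 1\<close>.\<close>

type_synonym 'n intpoly = "('n \<Rightarrow>\<^sub>0 nat) \<Rightarrow>\<^sub>0 int"

text \<open>Componentwise (product) order on exponent vectors (NOT the library's lexicographic order).\<close>
definition le_comp :: "('n \<Rightarrow>\<^sub>0 nat) \<Rightarrow> ('n \<Rightarrow>\<^sub>0 nat) \<Rightarrow> bool" where
  "le_comp a b \<longleftrightarrow> (\<forall>i. Poly_Mapping.lookup a i \<le> Poly_Mapping.lookup b i)"

definition minimal_monomials :: "'n intpoly \<Rightarrow> ('n \<Rightarrow>\<^sub>0 nat) set" where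
  "minimal_monomials p = {\<beta>. Poly_Mapping.lookup p \<beta> \<noteq> 0 \<and>
     \<not> (\<exists>\<beta>'. \<beta>' \<noteq> \<beta> \<and> Poly_Mapping.lookup p \<beta>' \<noteq> 0 \<and> le_comp \<beta>' \<beta>)}"

end

theory Submission
  imports Defs Complex_Main
begin

text \<open>A key of \<open>p\<close> minimizing \<open>\<langle>w, \<cdot>\<rangle>\<close> for a positive weight \<open>w\<close> is a minimal monomial, so it
  suffices to count keys exposed in this way. For an open convex set \<open>C\<close> of weights, a product of
  binomials \<open>X\<^sup>a - X\<^sup>b\<close> with some \<open>g \<noteq> 0\<close> has at least one more key exposed by weights in \<open>C\<close> than
  there are binomials whose hyperplane \<open>\<langle>w, a\<rangle> = \<langle>w, b\<rangle>\<close> splits \<open>C\<close>. By induction, pull out a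
  splitting binomial with its multiplicity \<open>r\<close>: the keys exposed from either side of its hyperplane
  are translates of those of the remaining product, and a weight on the hyperplane exposes \<open>r - 1\<close>
  further keys, the interior points of a line parallel to \<open>a - b\<close> carrying \<open>r + 1\<close> keys by a
  Descartes-type bound. Distinct irreducible binomials have non-parallel exponent differences, so
  every other splitting hyperplane still splits one of the two sides; for the positive weights all
  hyperplanes split.\<close>

lemma lookup_single_mult_add:
  fixes h :: "'a::cancel_comm_monoid_add \<Rightarrow>\<^sub>0 'b::semiring_0"
  shows "Poly_Mapping.lookup (Poly_Mapping.single a c * h) (a + q) = c * Poly_Mapping.lookup h q"
proof -
  have "Poly_Mapping.lookup (Poly_Mapping.single a c * h) (a + q)
      = c * Sum_any (\<lambda>q'. Poly_Mapping.lookup h q' when a + q = a + q')"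
    by (simp add: lookup_mult lookup_single when_mult)
  also have "Sum_any (\<lambda>q'. Poly_Mapping.lookup h q' when a + q = a + q') = Sum_any (\<lambda>q'. Poly_Mapping.lookup h q' when q' = q)"
    by (rule Sum_any.cong) (auto simp: when_def)
  finally show ?thesis by simp
qed

lemma lookup_single_mult_not_add:
  fixes h :: "'a::cancel_comm_monoid_add \<Rightarrow>\<^sub>0 'b::semiring_0"
  assumes "\<And>q. k \<noteq> a + q"
  shows "Poly_Mapping.lookup (Poly_Mapping.single a c * h) k = 0"
proof -
  have "Poly_Mapping.lookup (Poly_Mapping.single a c * h) k
      = c * Sum_any (\<lambda>q. Poly_Mapping.lookup h q when k = a + q)"
    by (simp add: lookup_mult lookup_single when_mult)
  then show ?thesis using assms by (simp add: when_def)
qed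

lemma keys_single_mult:
  fixes h :: "'a::cancel_comm_monoid_add \<Rightarrow>\<^sub>0 'b::{semiring_0,semiring_no_zero_divisors}"
  assumes "c \<noteq> 0"
  shows "Poly_Mapping.keys (Poly_Mapping.single a c * h) = (+) a ` Poly_Mapping.keys h"
proof (rule set_eqI)
  fix k
  show "k \<in> Poly_Mapping.keys (Poly_Mapping.single a c * h) \<longleftrightarrow> k \<in> (+) a ` Poly_Mapping.keys h"
  proof (cases "\<exists>q. k = a + q")
    case True
    then obtain q where "k = a + q" by blast
    then show ?thesis using assms by (auto simp: lookup_single_mult_add in_keys_iff)
  next
    case False
    then show ?thesis by (auto simp: in_keys_iff lookup_single_mult_not_add)
  qed
qed

section \<open>Weighted degrees and minimal faces\<close>

definition wdeg :: "('n::finite \<Rightarrow> 'a::comm_semiring_1) \<Rightarrow> ('n \<Rightarrow>\<^sub>0 nat) \<Rightarrow> 'a" where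
  "wdeg w \<beta> = (\<Sum>l\<in>UNIV. w l * of_nat (Poly_Mapping.lookup \<beta> l))"

lemma wdeg_zero [simp]: "wdeg w 0 = 0"
  by (simp add: wdeg_def)

lemma wdeg_add [simp]: "wdeg w (\<beta> + \<gamma>) = wdeg w \<beta> + wdeg w \<gamma>"
  by (simp add: wdeg_def lookup_add distrib_left sum.distrib)

lemma wdeg_sum: "wdeg w (sum f A) = (\<Sum>x\<in>A. wdeg w (f x))"
  by (induction A rule: infinite_finite_induct) simp_all

lemma wdeg_weight_add [simp]: "wdeg (\<lambda>l. v l + w l) \<beta> = wdeg v \<beta> + wdeg w \<beta>"
  by (simp add: wdeg_def distrib_right sum.distrib)

lemma wdeg_weight_scale [simp]: "wdeg (\<lambda>l. c * w l) \<beta> = c * wdeg w \<beta>"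
  by (simp add: wdeg_def sum_distrib_left mult.assoc)

lemma wdeg_weight_uminus [simp]:
  fixes w :: "'n::finite \<Rightarrow> 'a::comm_ring_1"
  shows "wdeg (\<lambda>l. - w l) \<beta> = - wdeg w \<beta>"
  by (simp add: wdeg_def sum_negf)

lemma wdeg_weight_diff [simp]:
  fixes w :: "'n::finite \<Rightarrow> 'a::comm_ring_1"
  shows "wdeg (\<lambda>l. v l - w l) \<beta> = wdeg v \<beta> - wdeg w \<beta>"
  by (simp add: wdeg_def left_diff_distrib sum_subtractf)

lemma of_int_wdeg: "of_int (wdeg w \<beta>) = wdeg (\<lambda>l. of_int (w l)) \<beta>"
  by (simp add: wdeg_def)

definition exp_diff :: "('n \<Rightarrow>\<^sub>0 nat) \<Rightarrow> ('n \<Rightarrow>\<^sub>0 nat) \<Rightarrow> 'n \<Rightarrow> int" where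
  "exp_diff a b l = int (Poly_Mapping.lookup a l) - int (Poly_Mapping.lookup b l)"

lemma exp_diff_eq_0_iff: "(\<forall>l. exp_diff a b l = 0) \<longleftrightarrow> a = b"
  by (auto simp: exp_diff_def intro: poly_mapping_eqI)

lemma wdeg_diff:
  fixes w :: "'n::finite \<Rightarrow> 'a::comm_ring_1"
  shows "wdeg w a - wdeg w b = (\<Sum>l\<in>UNIV. w l * of_int (exp_diff a b l))"
  by (simp add: wdeg_def exp_diff_def right_diff_distrib sum_subtractf)

lemma wdeg_diff_collinear:
  assumes "\<And>l. real (Poly_Mapping.lookup \<beta>' l) - real (Poly_Mapping.lookup \<beta> l) = t * of_int (exp_diff a b l)"
  shows "wdeg w \<beta>' - wdeg w \<beta> = t * (wdeg w a - wdeg w b)"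
proof -
  have "wdeg w \<beta>' - wdeg w \<beta> = (\<Sum>l\<in>UNIV. w l * (real (Poly_Mapping.lookup \<beta>' l) - real (Poly_Mapping.lookup \<beta> l)))"
    by (simp add: wdeg_def right_diff_distrib sum_subtractf)
  also have "\<dots> = t * (\<Sum>l\<in>UNIV. w l * of_int (exp_diff a b l))"
    by (simp add: assms sum_distrib_left algebra_simps)
  finally show ?thesis by (simp add: wdeg_diff)
qed

lemma wdeg_exp_diff_less:
  fixes a b :: "'n::finite \<Rightarrow>\<^sub>0 nat"
  assumes "a \<noteq> b"
  shows "wdeg (\<lambda>l. of_int (exp_diff a b l)) b < (wdeg (\<lambda>l. of_int (exp_diff a b l)) a :: real)"
proof -
  obtain l where l: "exp_diff a b l \<noteq> 0" using assms exp_diff_eq_0_iff by blast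
  have "0 < real_of_int (exp_diff a b l) * of_int (exp_diff a b l)"
    using l by (auto simp: zero_less_mult_iff linorder_neq_iff)
  also have "\<dots> \<le> (\<Sum>l\<in>UNIV. of_int (exp_diff a b l) * of_int (exp_diff a b l))"
    by (rule member_le_sum) auto
  finally show ?thesis by (simp add: wdeg_diff[symmetric])
qed

definition min_face :: "('n::finite \<Rightarrow> real) \<Rightarrow> ('n \<Rightarrow>\<^sub>0 nat) set \<Rightarrow> ('n \<Rightarrow>\<^sub>0 nat) set" where
  "min_face w S = {\<beta>\<in>S. \<forall>\<beta>'\<in>S. wdeg w \<beta> \<le> wdeg w \<beta>'}"

lemma min_face_subset: "min_face w S \<subseteq> S"
  by (auto simp: min_face_def)

lemma min_face_nonempty:
  assumes "finite S" "S \<noteq> {}"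
  shows "min_face w S \<noteq> {}"
proof -
  have "Min (wdeg w ` S) \<in> wdeg w ` S" using assms by simp
  then obtain \<beta> where "\<beta> \<in> S" "wdeg w \<beta> = Min (wdeg w ` S)" by auto
  then have "\<beta> \<in> min_face w S" using assms by (auto simp: min_face_def)
  then show ?thesis by blast
qed

definition binom :: "('n \<Rightarrow>\<^sub>0 nat) \<Rightarrow> ('n \<Rightarrow>\<^sub>0 nat) \<Rightarrow> 'n intpoly" where
  "binom a b = Poly_Mapping.single a 1 - Poly_Mapping.single b 1"

lemma binom_swap: "binom a b = - binom b a"
  by (simp add: binom_def)

lemma lookup_binom_mult:
  "Poly_Mapping.lookup (binom a b * h) k =
     Poly_Mapping.lookup (Poly_Mapping.single a 1 * h) k - Poly_Mapping.lookup (Poly_Mapping.single b 1 * h) k"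
  by (simp add: binom_def left_diff_distrib lookup_minus)

lemma keys_binom_mult:
  "Poly_Mapping.keys (binom a b * h) \<subseteq> (+) a ` Poly_Mapping.keys h \<union> (+) b ` Poly_Mapping.keys h"
proof -
  have "binom a b * h = Poly_Mapping.single a 1 * h - Poly_Mapping.single b 1 * h"
    by (simp add: binom_def left_diff_distrib)
  then show ?thesis
    using keys_diff[of "Poly_Mapping.single a 1 * h" "Poly_Mapping.single b 1 * h"]
    by (simp add: keys_single_mult)
qed

lemma add_min_face_in_keys_binom_mult:
  fixes h :: "'n::finite intpoly"
  assumes \<gamma>: "\<gamma> \<in> min_face w (Poly_Mapping.keys h)" and ab: "wdeg w b < wdeg w a"
  shows "b + \<gamma> \<in> Poly_Mapping.keys (binom a b * h)"
proof -
  \<comment> \<open>\<open>b + \<gamma>\<close> is not of the form \<open>a + q\<close> with \<open>q\<close> a key of \<open>h\<close>, since \<open>q\<close> would have smaller degree than \<open>\<gamma>\<close>.\<close>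
  have "Poly_Mapping.lookup (Poly_Mapping.single a 1 * h) (b + \<gamma>) = 0"
  proof (cases "\<exists>q. b + \<gamma> = a + q")
    case True
    then obtain q where q: "b + \<gamma> = a + q" by blast
    have "wdeg w q < wdeg w \<gamma>"
      using ab arg_cong[OF q, of "wdeg w"] by simp
    then have "q \<notin> Poly_Mapping.keys h" using \<gamma> by (auto simp: min_face_def)
    then show ?thesis by (simp add: q lookup_single_mult_add in_keys_iff)
  next
    case False
    then show ?thesis by (auto intro: lookup_single_mult_not_add)
  qed
  moreover have "\<gamma> \<in> Poly_Mapping.keys h" using \<gamma> by (auto simp: min_face_def)
  ultimately show ?thesis
    by (simp add: in_keys_iff lookup_binom_mult lookup_single_mult_add)
qed

lemma min_face_binom_mult:
  fixes h :: "'n::finite intpoly"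
  assumes h: "h \<noteq> 0" and ab: "wdeg w b < wdeg w a"
  shows "min_face w (Poly_Mapping.keys (binom a b * h)) = (+) b ` min_face w (Poly_Mapping.keys h)"
proof -
  let ?K = "Poly_Mapping.keys h"
  obtain \<gamma>0 where \<gamma>0: "\<gamma>0 \<in> min_face w ?K" using min_face_nonempty[of ?K] h by auto
  have lower: "wdeg w b + wdeg w \<gamma>0 \<le> wdeg w k" if "k \<in> Poly_Mapping.keys (binom a b * h)" for k
  proof -
    from keys_binom_mult that obtain q where q: "q \<in> ?K" "k = a + q \<or> k = b + q" by blast
    then have "wdeg w \<gamma>0 \<le> wdeg w q" using \<gamma>0 by (auto simp: min_face_def)
    then show ?thesis using q ab by auto
  qed
  show ?thesis
  proof (rule set_eqI, rule iffI)
    fix k assume k: "k \<in> min_face w (Poly_Mapping.keys (binom a b * h))"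
    then have "k \<in> Poly_Mapping.keys (binom a b * h)" by (auto simp: min_face_def)
    then obtain q where q: "q \<in> ?K" "k = a + q \<or> k = b + q" using keys_binom_mult by blast
    have k_le: "wdeg w k \<le> wdeg w (b + \<gamma>0)"
      using k add_min_face_in_keys_binom_mult[OF \<gamma>0 ab] by (auto simp: min_face_def)
    have "wdeg w \<gamma>0 \<le> wdeg w q" using \<gamma>0 q by (auto simp: min_face_def)
    then have kq: "k = b + q" using q k_le ab by auto
    then have "q \<in> min_face w ?K" using q k_le \<gamma>0 by (auto simp: min_face_def)
    then show "k \<in> (+) b ` min_face w ?K" using kq by blast
  next
    fix k assume "k \<in> (+) b ` min_face w ?K"
    then obtain \<gamma> where \<gamma>: "\<gamma> \<in> min_face w ?K" "k = b + \<gamma>" by blast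
    have "wdeg w \<gamma> = wdeg w \<gamma>0" using \<gamma> \<gamma>0 by (auto simp: min_face_def intro: antisym)
    then show "k \<in> min_face w (Poly_Mapping.keys (binom a b * h))"
      using add_min_face_in_keys_binom_mult[OF \<gamma>(1) ab] lower \<gamma> by (auto simp: min_face_def)
  qed
qed

lemma binom_mult_nonzero:
  fixes h :: "'n::finite intpoly"
  assumes "h \<noteq> 0" "a \<noteq> b"
  shows "binom a b * h \<noteq> 0"
proof -
  let ?w = "\<lambda>l. real_of_int (exp_diff a b l)"
  have "min_face ?w (Poly_Mapping.keys (binom a b * h)) = (+) b ` min_face ?w (Poly_Mapping.keys h)"
    using assms by (intro min_face_binom_mult wdeg_exp_diff_less)
  moreover have "min_face ?w (Poly_Mapping.keys h) \<noteq> {}"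
    using assms(1) by (simp add: min_face_nonempty)
  ultimately have "min_face ?w (Poly_Mapping.keys (binom a b * h)) \<noteq> {}" by simp
  then show ?thesis by (auto simp: min_face_def)
qed

lemma binom_pow_mult_nonzero:
  fixes h :: "'n::finite intpoly"
  assumes "h \<noteq> 0" "a \<noteq> b"
  shows "binom a b ^ r * h \<noteq> 0"
  by (induction r) (simp_all add: assms mult.assoc binom_mult_nonzero)

lemma min_face_binom_pow_mult:
  fixes h :: "'n::finite intpoly"
  assumes h: "h \<noteq> 0" and ab: "wdeg w b < wdeg w a"
  shows "min_face w (Poly_Mapping.keys (binom a b ^ r * h)) = (+) (\<Sum>i<r. b) ` min_face w (Poly_Mapping.keys h)"
proof (induction r)
  case 0
  then show ?case by simp
next
  case (Suc r)
  have "a \<noteq> b" using ab by auto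
  have "min_face w (Poly_Mapping.keys (binom a b ^ Suc r * h))
      = min_face w (Poly_Mapping.keys (binom a b * (binom a b ^ r * h)))"
    by (simp add: mult.assoc)
  also have "\<dots> = (+) b ` min_face w (Poly_Mapping.keys (binom a b ^ r * h))"
    by (rule min_face_binom_mult[OF binom_pow_mult_nonzero[OF h \<open>a \<noteq> b\<close>] ab])
  also have "\<dots> = (+) (\<Sum>i<Suc r. b) ` min_face w (Poly_Mapping.keys h)"
    unfolding Suc image_image by (simp add: add_ac)
  finally show ?case .
qed

lemma keys_binom_swap_pow_mult:
  "Poly_Mapping.keys (binom b a ^ r * h) = Poly_Mapping.keys (binom a b ^ r * h)"
proof -
  have "binom b a ^ r * h = (-1) ^ r * (binom a b ^ r * h)"
    by (simp only: binom_swap[of b a] power_minus[of "binom a b"] mult.assoc)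
  then show ?thesis by (cases "even r") (simp_all add: neg_one_even_power neg_one_odd_power)
qed

lemma min_face_binom_pow_mult_disjoint:
  fixes h :: "'n::finite intpoly"
  assumes h: "h \<noteq> 0" and r: "r \<ge> 1"
    and w: "wdeg w b < wdeg w a" and w': "wdeg w' a < wdeg w' b"
  shows "min_face w (Poly_Mapping.keys (binom a b ^ r * h)) \<inter> min_face w' (Poly_Mapping.keys (binom a b ^ r * h)) = {}"
proof (rule ccontr)
  assume "\<not> ?thesis"
  then obtain \<beta> where \<beta>: "\<beta> \<in> min_face w (Poly_Mapping.keys (binom a b ^ r * h))"
    "\<beta> \<in> min_face w' (Poly_Mapping.keys (binom b a ^ r * h))"
    by (auto simp: keys_binom_swap_pow_mult)
  obtain \<gamma> where \<gamma>: "\<gamma> \<in> min_face w (Poly_Mapping.keys h)" "\<beta> = (\<Sum>i<r. b) + \<gamma>"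
    using \<beta>(1) min_face_binom_pow_mult[OF h w] by blast
  obtain \<gamma>' where \<gamma>': "\<gamma>' \<in> min_face w' (Poly_Mapping.keys h)" "\<beta> = (\<Sum>i<r. a) + \<gamma>'"
    using \<beta>(2) min_face_binom_pow_mult[OF h w'] by blast
  have "wdeg w \<gamma> \<le> wdeg w \<gamma>'" using \<gamma> \<gamma>' min_face_subset by (auto simp: min_face_def)
  moreover have "real r * wdeg w b + wdeg w \<gamma> = real r * wdeg w a + wdeg w \<gamma>'"
    using arg_cong[of _ _ "wdeg w", OF trans[OF \<gamma>(2)[symmetric] \<gamma>'(2)]] by (simp add: wdeg_sum)
  moreover have "real r * wdeg w b < real r * wdeg w a" using r w by simp
  ultimately show False by linarith
qed

lemma two_le_card_keys_binom_pow_mult: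
  fixes h :: "'n::finite intpoly"
  assumes h: "h \<noteq> 0" and r: "r \<ge> 1" and ab: "a \<noteq> b"
  shows "2 \<le> card (Poly_Mapping.keys (binom a b ^ r * h))"
proof -
  let ?w = "\<lambda>l. real_of_int (exp_diff a b l)" and ?K = "Poly_Mapping.keys (binom a b ^ r * h)"
  have K: "finite ?K" "?K \<noteq> {}" using binom_pow_mult_nonzero[OF h ab] by simp_all
  obtain \<beta> where \<beta>: "\<beta> \<in> min_face ?w ?K" using min_face_nonempty[OF K] by blast
  obtain \<beta>' where \<beta>': "\<beta>' \<in> min_face (\<lambda>l. - ?w l) ?K" using min_face_nonempty[OF K] by blast
  have "min_face ?w ?K \<inter> min_face (\<lambda>l. - ?w l) ?K = {}"
    using wdeg_exp_diff_less[OF ab] by (intro min_face_binom_pow_mult_disjoint[OF h r]) auto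
  then have "\<beta> \<noteq> \<beta>'" using \<beta> \<beta>' by blast
  have sub: "{\<beta>, \<beta>'} \<subseteq> ?K" using \<beta> \<beta>' min_face_subset by blast
  have "card {\<beta>, \<beta>'} \<le> card ?K" by (rule card_mono[OF finite_keys sub])
  moreover have "card {\<beta>, \<beta>'} = 2" using \<open>\<beta> \<noteq> \<beta>'\<close> by simp
  ultimately show ?thesis by linarith
qed

section \<open>A Descartes-type bound\<close>

definition euler_op :: "('n::finite \<Rightarrow> int) \<Rightarrow> 'n intpoly \<Rightarrow> 'n intpoly" where
  "euler_op c h = Poly_Mapping.mapp (\<lambda>k x. wdeg c k * x) h"

lemma lookup_euler_op: "Poly_Mapping.lookup (euler_op c h) k = wdeg c k * Poly_Mapping.lookup h k"
  by (simp add: euler_op_def lookup_mapp in_keys_iff when_def)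

lemma euler_op_diff: "euler_op c (u - v) = euler_op c u - euler_op c v"
  by (rule poly_mapping_eqI) (simp add: lookup_euler_op lookup_minus algebra_simps)

lemma euler_op_single_mult:
  "euler_op c (Poly_Mapping.single a x * h) =
     Poly_Mapping.single a (x * wdeg c a) * h + Poly_Mapping.single a x * euler_op c h"
proof (rule poly_mapping_eqI)
  fix k
  show "Poly_Mapping.lookup (euler_op c (Poly_Mapping.single a x * h)) k =
    Poly_Mapping.lookup (Poly_Mapping.single a (x * wdeg c a) * h + Poly_Mapping.single a x * euler_op c h) k"
  proof (cases "\<exists>q. k = a + q")
    case True
    then obtain q where k: "k = a + q" by blast
    show ?thesis
      unfolding k lookup_add lookup_euler_op lookup_single_mult_add wdeg_add by (simp add: algebra_simps)
  next
    case False
    then show ?thesis by (simp add: lookup_add lookup_euler_op lookup_single_mult_not_add)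
  qed
qed

lemma euler_op_binom_mult:
  "euler_op c (binom a b * h) = binom a b * euler_op c h +
     (Poly_Mapping.single a (wdeg c a) - Poly_Mapping.single b (wdeg c b)) * h"
  by (simp add: binom_def left_diff_distrib euler_op_diff euler_op_single_mult)

lemma euler_op_binom_pow_mult: "\<exists>G. euler_op c (binom a b ^ Suc r * g) = binom a b ^ r * G"
proof (induction r)
  case 0
  show ?case using euler_op_binom_mult[of c a b g] by auto
next
  case (Suc r)
  then obtain G where G: "euler_op c (binom a b ^ Suc r * g) = binom a b ^ r * G" by blast
  let ?e = "Poly_Mapping.single a (wdeg c a) - Poly_Mapping.single b (wdeg c b)"
  have "euler_op c (binom a b ^ Suc (Suc r) * g) = euler_op c (binom a b * (binom a b ^ Suc r * g))"
    by (simp only: power_Suc mult.assoc)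
  also have "\<dots> = binom a b * (binom a b ^ r * G) + ?e * (binom a b ^ Suc r * g)"
    by (simp only: euler_op_binom_mult G)
  also have "\<dots> = binom a b ^ Suc r * (G + ?e * g)"
    by (simp add: algebra_simps)
  finally show ?case by blast
qed

text \<open>Subtracting \<open>s\<close> times the polynomial from its image under the Euler operator in direction
  \<open>a - b\<close> removes exactly the key of degree \<open>s\<close> and lowers the binomial power by one.\<close>

lemma card_keys_binom_pow_mult_ge:
  fixes g :: "'n::finite intpoly"
  assumes "a \<noteq> b" "g \<noteq> 0"
    and "inj_on (wdeg (exp_diff a b)) (Poly_Mapping.keys (binom a b ^ r * g))"
  shows "r + 1 \<le> card (Poly_Mapping.keys (binom a b ^ r * g))"
  using assms(2,3)
proof (induction r arbitrary: g)
  case 0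
  then show ?case by (simp add: Suc_le_eq card_gt_0_iff)
next
  case (Suc r)
  let ?h = "binom a b ^ Suc r * g" and ?d = "exp_diff a b"
  have two: "2 \<le> card (Poly_Mapping.keys ?h)"
    by (rule two_le_card_keys_binom_pow_mult[OF Suc.prems(1) _ assms(1)]) simp
  then obtain \<beta>0 where \<beta>0: "\<beta>0 \<in> Poly_Mapping.keys ?h" by fastforce
  define T where "T = euler_op ?d ?h - Poly_Mapping.single 0 (wdeg ?d \<beta>0) * ?h"
  have "Poly_Mapping.lookup T k = (wdeg ?d k - wdeg ?d \<beta>0) * Poly_Mapping.lookup ?h k" for k
    using lookup_single_mult_add[of 0 "wdeg ?d \<beta>0" ?h k]
    by (simp add: T_def lookup_minus lookup_euler_op algebra_simps)
  then have keys_T: "Poly_Mapping.keys T = Poly_Mapping.keys ?h - {\<beta>0}"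
    using inj_on_eq_iff[OF Suc.prems(2) _ \<beta>0] by (auto simp: in_keys_iff)
  obtain G where G: "euler_op ?d ?h = binom a b ^ r * G" using euler_op_binom_pow_mult by blast
  define g' where "g' = G - Poly_Mapping.single 0 (wdeg ?d \<beta>0) * (binom a b * g)"
  have T: "T = binom a b ^ r * g'"
    unfolding T_def G g'_def by (simp add: right_diff_distrib power_Suc ac_simps)
  have card_T: "card (Poly_Mapping.keys T) = card (Poly_Mapping.keys ?h) - 1"
    using \<beta>0 by (simp add: keys_T)
  then have "g' \<noteq> 0" using two T by auto
  moreover have "inj_on (wdeg ?d) (Poly_Mapping.keys (binom a b ^ r * g'))"
    using Suc.prems(2) unfolding T[symmetric] keys_T by (rule inj_on_subset) blast
  ultimately have "r + 1 \<le> card (Poly_Mapping.keys T)" unfolding T by (rule Suc.IH)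
  then show ?case using card_T two by simp
qed

definition initial_form :: "('n::finite \<Rightarrow> real) \<Rightarrow> 'n intpoly \<Rightarrow> 'n intpoly" where
  "initial_form w h = Poly_Mapping.mapp (\<lambda>k x. if k \<in> min_face w (Poly_Mapping.keys h) then x else 0) h"

lemma lookup_initial_form:
  "Poly_Mapping.lookup (initial_form w h) k =
     (if k \<in> min_face w (Poly_Mapping.keys h) then Poly_Mapping.lookup h k else 0)"
  by (auto simp: initial_form_def lookup_mapp in_keys_iff min_face_def)

lemma keys_initial_form: "Poly_Mapping.keys (initial_form w h) = min_face w (Poly_Mapping.keys h)"
  by (auto simp: in_keys_iff lookup_initial_form min_face_def split: if_splits)

lemma initial_form_nonzero: "h \<noteq> 0 \<Longrightarrow> initial_form w h \<noteq> 0"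
  using min_face_nonempty[of "Poly_Mapping.keys h" w] keys_initial_form[of w h] by auto

lemma keys_binom_pow_mult_subset:
  fixes h :: "'n::finite intpoly"
  assumes "wdeg v a = wdeg v b"
  shows "Poly_Mapping.keys (binom a b ^ r * h) \<subseteq>
    {c + x | c x. wdeg v c = real r * wdeg v a \<and> x \<in> Poly_Mapping.keys h}"
proof (induction r)
  case 0
  then show ?case by force
next
  case (Suc r)
  have "Poly_Mapping.keys (binom a b ^ Suc r * h) \<subseteq>
      (+) a ` Poly_Mapping.keys (binom a b ^ r * h) \<union> (+) b ` Poly_Mapping.keys (binom a b ^ r * h)"
    using keys_binom_mult[of a b "binom a b ^ r * h"] by (simp add: mult.assoc)
  also have "\<dots> \<subseteq> {c + x | c x. wdeg v c = real (Suc r) * wdeg v a \<and> x \<in> Poly_Mapping.keys h}"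
  proof (intro Un_least image_subsetI)
    fix y assume "y \<in> Poly_Mapping.keys (binom a b ^ r * h)"
    then obtain c x where y: "y = c + x" "wdeg v c = real r * wdeg v a" "x \<in> Poly_Mapping.keys h"
      using Suc by blast
    have "a + y = (a + c) + x" "b + y = (b + c) + x" by (simp_all add: y add.assoc)
    moreover have "wdeg v (a + c) = real (Suc r) * wdeg v a" "wdeg v (b + c) = real (Suc r) * wdeg v a"
      using y(2) assms by (simp_all add: algebra_simps)
    ultimately show "a + y \<in> {c + x | c x. wdeg v c = real (Suc r) * wdeg v a \<and> x \<in> Poly_Mapping.keys h}"
      and "b + y \<in> {c + x | c x. wdeg v c = real (Suc r) * wdeg v a \<and> x \<in> Poly_Mapping.keys h}"
      using y(3) by blast+
  qed
  finally show ?case .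
qed

text \<open>For a weight \<open>v\<close> constant on \<open>{a, b}\<close>, multiplication by \<open>(X\<^sup>a - X\<^sup>b)\<^sup>r\<close> shifts all
  \<open>v\<close>-degrees by the same amount, so it maps the initial form into the initial form.\<close>

lemma keys_binom_pow_mult_initial_form:
  fixes h :: "'n::finite intpoly"
  assumes hom: "wdeg v a = wdeg v b" and h: "h \<noteq> 0"
  shows "Poly_Mapping.keys (binom a b ^ r * initial_form v h)
    \<subseteq> min_face v (Poly_Mapping.keys (binom a b ^ r * h))"
proof
  fix \<beta> assume \<beta>: "\<beta> \<in> Poly_Mapping.keys (binom a b ^ r * initial_form v h)"
  obtain \<gamma>0 where \<gamma>0: "\<gamma>0 \<in> min_face v (Poly_Mapping.keys h)"
    using min_face_nonempty[of "Poly_Mapping.keys h" v] h by auto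
  let ?m = "real r * wdeg v a + wdeg v \<gamma>0"
  have deg_low: "wdeg v x = wdeg v \<gamma>0" if "x \<in> Poly_Mapping.keys (initial_form v h)" for x
    using that \<gamma>0 by (auto simp: keys_initial_form min_face_def intro: antisym)
  have deg_high: "wdeg v \<gamma>0 < wdeg v x" if "x \<in> Poly_Mapping.keys (h - initial_form v h)" for x
  proof -
    have "x \<in> Poly_Mapping.keys h" "x \<notin> min_face v (Poly_Mapping.keys h)"
      using that by (auto simp: in_keys_iff lookup_minus lookup_initial_form split: if_splits)
    then show ?thesis using \<gamma>0 by (auto simp: min_face_def)
  qed
  have deg_all: "?m \<le> wdeg v x" if "x \<in> Poly_Mapping.keys (binom a b ^ r * h)" for x
    using keys_binom_pow_mult_subset[OF hom, of r h] that \<gamma>0 by (force simp: min_face_def)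
  from keys_binom_pow_mult_subset[OF hom, of r "initial_form v h"] \<beta>
  have deg_\<beta>: "wdeg v \<beta> = ?m" using deg_low by force
  have "\<beta> \<notin> Poly_Mapping.keys (binom a b ^ r * (h - initial_form v h))"
    using keys_binom_pow_mult_subset[OF hom, of r "h - initial_form v h"] deg_\<beta> deg_high by force
  moreover have "binom a b ^ r * h = binom a b ^ r * initial_form v h + binom a b ^ r * (h - initial_form v h)"
    by (simp add: algebra_simps)
  ultimately have "\<beta> \<in> Poly_Mapping.keys (binom a b ^ r * h)"
    using \<beta> by (auto simp: in_keys_iff lookup_add)
  then show "\<beta> \<in> min_face v (Poly_Mapping.keys (binom a b ^ r * h))"
    using deg_all deg_\<beta> by (auto simp: min_face_def)
qed

lemma ex_binom_pow_mult_level_keys: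
  fixes h :: "'n::finite intpoly" and V :: "('n \<Rightarrow> real) set"
  assumes "finite V" and hom: "\<And>v. v \<in> V \<Longrightarrow> wdeg v a = wdeg v b" and "h \<noteq> 0"
  shows "\<exists>h'. h' \<noteq> 0 \<and>
    Poly_Mapping.keys (binom a b ^ r * h') \<subseteq> Poly_Mapping.keys (binom a b ^ r * h) \<and>
    (\<forall>v\<in>V. \<forall>\<beta>\<in>Poly_Mapping.keys (binom a b ^ r * h'). \<forall>\<beta>'\<in>Poly_Mapping.keys (binom a b ^ r * h').
       wdeg v \<beta> = wdeg v \<beta>')"
  using assms(1,2)
proof (induction V rule: finite_induct)
  case empty
  then show ?case using \<open>h \<noteq> 0\<close> by blast
next
  case (insert v V)
  then obtain h' where h': "h' \<noteq> 0"
    "Poly_Mapping.keys (binom a b ^ r * h') \<subseteq> Poly_Mapping.keys (binom a b ^ r * h)"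
    "\<forall>u\<in>V. \<forall>\<beta>\<in>Poly_Mapping.keys (binom a b ^ r * h'). \<forall>\<beta>'\<in>Poly_Mapping.keys (binom a b ^ r * h').
       wdeg u \<beta> = wdeg u \<beta>'"
    by auto
  let ?K = "Poly_Mapping.keys (binom a b ^ r * initial_form v h')"
  have sub: "?K \<subseteq> min_face v (Poly_Mapping.keys (binom a b ^ r * h'))"
    by (rule keys_binom_pow_mult_initial_form[OF insert.prems h'(1)]) simp
  have "\<forall>u\<in>insert v V. \<forall>\<beta>\<in>?K. \<forall>\<beta>'\<in>?K. wdeg u \<beta> = wdeg u \<beta>'"
  proof (intro ballI)
    fix u \<beta> \<beta>' assume u: "u \<in> insert v V" and \<beta>: "\<beta> \<in> ?K" and \<beta>': "\<beta>' \<in> ?K"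
    show "wdeg u \<beta> = wdeg u \<beta>'"
    proof (cases "u = v")
      case True
      then show ?thesis using sub \<beta> \<beta>' by (auto simp: min_face_def intro: antisym)
    next
      case False
      then show ?thesis using u h'(3) sub \<beta> \<beta>' min_face_subset by blast
    qed
  qed
  then show ?case
    using initial_form_nonzero[OF h'(1)] sub h'(2) min_face_subset by blast
qed

lemma wdeg_less_if_collinear:
  fixes w :: "'n::finite \<Rightarrow> real"
  assumes col: "\<And>l. real (Poly_Mapping.lookup \<beta>' l) - real (Poly_Mapping.lookup \<beta> l) = t * of_int (exp_diff a b l)"
    and less: "wdeg (\<lambda>l. of_int (exp_diff a b l)) \<beta>' < (wdeg (\<lambda>l. of_int (exp_diff a b l)) \<beta> :: real)"
    and w: "wdeg w b < wdeg w a"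
  shows "wdeg w \<beta>' < wdeg w \<beta>"
proof -
  let ?d = "\<lambda>l. real_of_int (exp_diff a b l)"
  have "a \<noteq> b" using w by auto
  have "t * (wdeg ?d a - wdeg ?d b) < 0"
    using less wdeg_diff_collinear[OF col, of ?d] by simp
  then have "t < 0" using wdeg_exp_diff_less[OF \<open>a \<noteq> b\<close>] by (simp add: mult_less_0_iff)
  then have "t * (wdeg w a - wdeg w b) < 0" using w by (simp add: mult_neg_pos)
  then show ?thesis using wdeg_diff_collinear[OF col, of w] by simp
qed

lemma eq_if_collinear_wdeg_eq:
  assumes col: "\<And>l. real (Poly_Mapping.lookup \<beta>' l) - real (Poly_Mapping.lookup \<beta> l) = t * of_int (exp_diff a b l)"
    and eq: "wdeg (\<lambda>l. of_int (exp_diff a b l)) \<beta>' = (wdeg (\<lambda>l. of_int (exp_diff a b l)) \<beta> :: real)"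
    and "a \<noteq> b"
  shows "\<beta>' = \<beta>"
proof -
  let ?d = "\<lambda>l. real_of_int (exp_diff a b l)"
  have "t * (wdeg ?d a - wdeg ?d b) = 0"
    using eq wdeg_diff_collinear[OF col, of ?d] by simp
  then have "t = 0" using wdeg_exp_diff_less[OF \<open>a \<noteq> b\<close>] by simp
  then show ?thesis using col by (intro poly_mapping_eqI) simp
qed

definition minor_weight :: "('n \<Rightarrow> int) \<Rightarrow> 'n \<Rightarrow> 'n \<Rightarrow> 'n \<Rightarrow> real" where
  "minor_weight d l m = (\<lambda>x. (if x = l then of_int (d m) else 0) - (if x = m then of_int (d l) else 0))"

lemma wdeg_minor_weight:
  "wdeg (minor_weight d l m) \<beta> =
     of_int (d m) * real (Poly_Mapping.lookup \<beta> l) - of_int (d l) * real (Poly_Mapping.lookup \<beta> m)"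
  by (simp add: wdeg_def minor_weight_def left_diff_distrib sum_subtractf if_distrib[of "\<lambda>x. x * _"]
      cong: if_cong)

lemma wdeg_minor_weight_exp_diff:
  "wdeg (minor_weight (exp_diff a b) l m) a = wdeg (minor_weight (exp_diff a b) l m) b"
  by (simp add: wdeg_minor_weight exp_diff_def algebra_simps)

lemma collinear_if_minor_weights:
  fixes d :: "'n::finite \<Rightarrow> int"
  assumes l0: "d l0 \<noteq> 0" and eq: "\<And>l m. wdeg (minor_weight d l m) \<beta> = wdeg (minor_weight d l m) \<beta>'"
  shows "\<exists>t. \<forall>l. real (Poly_Mapping.lookup \<beta>' l) - real (Poly_Mapping.lookup \<beta> l) = t * of_int (d l)"
proof (intro exI allI)
  fix l
  have "of_int (d l0) * (real (Poly_Mapping.lookup \<beta>' l) - real (Poly_Mapping.lookup \<beta> l)) =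
        of_int (d l) * (real (Poly_Mapping.lookup \<beta>' l0) - real (Poly_Mapping.lookup \<beta> l0))"
    using eq[of l l0] by (simp add: wdeg_minor_weight algebra_simps)
  then show "real (Poly_Mapping.lookup \<beta>' l) - real (Poly_Mapping.lookup \<beta> l) =
      (real (Poly_Mapping.lookup \<beta>' l0) - real (Poly_Mapping.lookup \<beta> l0)) / of_int (d l0) * of_int (d l)"
    using l0 by (simp add: field_simps)
qed

definition collinear_dir :: "('n \<Rightarrow>\<^sub>0 nat) \<Rightarrow> ('n \<Rightarrow>\<^sub>0 nat) \<Rightarrow> ('n \<Rightarrow>\<^sub>0 nat) set \<Rightarrow> bool" where
  "collinear_dir a b S \<longleftrightarrow> (\<forall>\<beta>\<in>S. \<forall>\<beta>'\<in>S. \<exists>t. \<forall>l.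
     real (Poly_Mapping.lookup \<beta>' l) - real (Poly_Mapping.lookup \<beta> l) = t * of_int (exp_diff a b l))"

text \<open>Restricting to initial forms with respect to \<open>w0\<close> and all minor weights of \<open>a - b\<close> leaves a
  polynomial \<open>(X\<^sup>a - X\<^sup>b)\<^sup>r h'\<close> whose keys lie on one line parallel to \<open>a - b\<close>.\<close>

lemma obtain_collinear_keys_in_min_face:
  fixes q :: "'n::finite intpoly"
  assumes ab: "a \<noteq> b" and q: "q \<noteq> 0" and hom: "wdeg w0 a = wdeg w0 b"
  obtains S where "S \<subseteq> min_face w0 (Poly_Mapping.keys (binom a b ^ r * q))" "r + 1 \<le> card S"
    "collinear_dir a b S"
proof -
  let ?d = "exp_diff a b"
  obtain l0 where l0: "?d l0 \<noteq> 0" using ab exp_diff_eq_0_iff by blast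
  define V where "V = range (\<lambda>(l, m). minor_weight ?d l m)"
  have V: "finite V" "\<And>v. v \<in> V \<Longrightarrow> wdeg v a = wdeg v b"
    unfolding V_def using wdeg_minor_weight_exp_diff by auto
  obtain h' where h': "h' \<noteq> 0"
    "Poly_Mapping.keys (binom a b ^ r * h') \<subseteq> Poly_Mapping.keys (binom a b ^ r * initial_form w0 q)"
    "\<forall>v\<in>V. \<forall>\<beta>\<in>Poly_Mapping.keys (binom a b ^ r * h'). \<forall>\<beta>'\<in>Poly_Mapping.keys (binom a b ^ r * h').
       wdeg v \<beta> = wdeg v \<beta>'"
    using ex_binom_pow_mult_level_keys[OF V initial_form_nonzero[OF q]] by blast
  define S where "S = Poly_Mapping.keys (binom a b ^ r * h')"
  have col: "collinear_dir a b S"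
    unfolding collinear_dir_def
  proof (intro ballI collinear_if_minor_weights[of ?d l0, OF l0])
    fix \<beta> \<beta>' l m assume "\<beta> \<in> S" "\<beta>' \<in> S"
    moreover have "minor_weight ?d l m \<in> V" unfolding V_def by (rule image_eqI[where x = "(l, m)"]) simp_all
    ultimately show "wdeg (minor_weight ?d l m) \<beta> = wdeg (minor_weight ?d l m) \<beta>'"
      using h'(3) unfolding S_def by blast
  qed
  have "inj_on (wdeg ?d) S"
  proof (rule inj_onI)
    fix \<beta> \<beta>' assume \<beta>: "\<beta> \<in> S" "\<beta>' \<in> S" and eq: "wdeg ?d \<beta> = wdeg ?d \<beta>'"
    obtain t where t: "\<And>l. real (Poly_Mapping.lookup \<beta>' l) - real (Poly_Mapping.lookup \<beta> l) = t * of_int (?d l)"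
      using col \<beta> unfolding collinear_dir_def by blast
    have "wdeg (\<lambda>l. real_of_int (?d l)) \<beta>' = wdeg (\<lambda>l. real_of_int (?d l)) \<beta>"
      using eq by (simp flip: of_int_wdeg)
    from eq_if_collinear_wdeg_eq[OF t this ab] show "\<beta> = \<beta>'" ..
  qed
  then have "r + 1 \<le> card S" unfolding S_def by (rule card_keys_binom_pow_mult_ge[OF ab h'(1)])
  moreover have "S \<subseteq> min_face w0 (Poly_Mapping.keys (binom a b ^ r * q))"
    using h'(2) keys_binom_pow_mult_initial_form[OF hom q] by (auto simp: S_def)
  ultimately show ?thesis using col by (intro that)
qed

text \<open>Only the two ends of the line can be minimal for a weight not constant on \<open>{a, b}\<close>.\<close>

lemma obtain_interior_points:
  fixes S :: "('n::finite \<Rightarrow>\<^sub>0 nat) set"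
  assumes "finite S" "a \<noteq> b" and col: "collinear_dir a b S"
  obtains X where "X \<subseteq> S" "card S - 2 \<le> card X"
    "\<And>\<beta> w. \<beta> \<in> X \<Longrightarrow> wdeg w a \<noteq> (wdeg w b :: real) \<Longrightarrow> \<exists>\<beta>'\<in>S. wdeg w \<beta>' < wdeg w \<beta>"
proof (cases "S = {}")
  case True
  then show ?thesis by (intro that[of "{}"]) auto
next
  case False
  let ?d = "\<lambda>l. real_of_int (exp_diff a b l)"
  obtain \<beta>min where \<beta>min: "\<beta>min \<in> min_face ?d S"
    using min_face_nonempty[OF \<open>finite S\<close>] False by blast
  obtain \<beta>max where \<beta>max: "\<beta>max \<in> min_face (\<lambda>l. - ?d l) S"
    using min_face_nonempty[OF \<open>finite S\<close>] False by blast
  have "\<exists>\<beta>'\<in>S. wdeg w \<beta>' < wdeg w \<beta>"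
    if \<beta>: "\<beta> \<in> S - {\<beta>min, \<beta>max}" and w: "wdeg w a \<noteq> wdeg w b" for \<beta> and w :: "'n \<Rightarrow> real"
  proof -
    have "\<beta> \<in> S" "\<beta>min \<in> S" "\<beta>max \<in> S" using \<beta> \<beta>min \<beta>max by (auto simp: min_face_def)
    obtain t where t: "\<And>l. real (Poly_Mapping.lookup \<beta>min l) - real (Poly_Mapping.lookup \<beta> l) = t * ?d l"
      using col \<open>\<beta> \<in> S\<close> \<open>\<beta>min \<in> S\<close> unfolding collinear_dir_def by blast
    obtain t' where t': "\<And>l. real (Poly_Mapping.lookup \<beta> l) - real (Poly_Mapping.lookup \<beta>max l) = t' * ?d l"
      using col \<open>\<beta> \<in> S\<close> \<open>\<beta>max \<in> S\<close> unfolding collinear_dir_def by blast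
    have "wdeg ?d \<beta>min \<noteq> wdeg ?d \<beta>" "wdeg ?d \<beta> \<noteq> wdeg ?d \<beta>max"
      using eq_if_collinear_wdeg_eq[OF t _ \<open>a \<noteq> b\<close>] eq_if_collinear_wdeg_eq[OF t' _ \<open>a \<noteq> b\<close>] \<beta> by auto
    then have "wdeg ?d \<beta>min < wdeg ?d \<beta>" "wdeg ?d \<beta>max > wdeg ?d \<beta>"
      using \<beta>min \<beta>max \<open>\<beta> \<in> S\<close> by (auto simp: min_face_def intro!: order.not_eq_order_implies_strict)
    then have "wdeg w b < wdeg w a \<Longrightarrow> wdeg w \<beta>min < wdeg w \<beta>"
      and "wdeg w a < wdeg w b \<Longrightarrow> wdeg w \<beta>max < wdeg w \<beta>"
      using wdeg_less_if_collinear[OF t, of w] wdeg_less_if_collinear[OF t', of "\<lambda>l. - w l"] by auto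
    then show ?thesis using w \<open>\<beta>min \<in> S\<close> \<open>\<beta>max \<in> S\<close> by (meson linorder_neqE_linordered_idom)
  qed
  moreover have "card S - 2 \<le> card (S - {\<beta>min, \<beta>max})"
  proof -
    have "card {\<beta>min, \<beta>max} \<le> 2" by (cases "\<beta>min = \<beta>max") simp_all
    then show ?thesis using diff_card_le_card_Diff[of "{\<beta>min, \<beta>max}" S] by simp
  qed
  ultimately show ?thesis by (intro that[of "S - {\<beta>min, \<beta>max}"]) auto
qed

lemma obtain_keys_hidden_off_hyperplane:
  fixes q :: "'n::finite intpoly"
  assumes "a \<noteq> b" "q \<noteq> 0" "wdeg w0 a = wdeg w0 b"
  obtains X where "X \<subseteq> min_face w0 (Poly_Mapping.keys (binom a b ^ r * q))" "r - 1 \<le> card X"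
    "\<And>\<beta> w. \<beta> \<in> X \<Longrightarrow> wdeg w a \<noteq> wdeg w b \<Longrightarrow> \<beta> \<notin> min_face w (Poly_Mapping.keys (binom a b ^ r * q))"
proof -
  let ?K = "Poly_Mapping.keys (binom a b ^ r * q)"
  obtain S where S: "S \<subseteq> min_face w0 ?K" "r + 1 \<le> card S" "collinear_dir a b S"
    by (rule obtain_collinear_keys_in_min_face[OF assms, where r = r])
  have "S \<subseteq> ?K" using S(1) min_face_subset by blast
  then have "finite S" by (rule finite_subset) simp
  obtain X where X: "X \<subseteq> S" "card S - 2 \<le> card X"
    "\<And>\<beta> w. \<beta> \<in> X \<Longrightarrow> wdeg w a \<noteq> (wdeg w b :: real) \<Longrightarrow> \<exists>\<beta>'\<in>S. wdeg w \<beta>' < wdeg w \<beta>"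
    using obtain_interior_points[OF \<open>finite S\<close> \<open>a \<noteq> b\<close> S(3)] by blast
  have "\<beta> \<notin> min_face w ?K" if \<beta>: "\<beta> \<in> X" and w: "wdeg w a \<noteq> wdeg w b" for \<beta> and w :: "'n \<Rightarrow> real"
  proof
    assume "\<beta> \<in> min_face w ?K"
    then have "wdeg w \<beta> \<le> wdeg w \<beta>'" if "\<beta>' \<in> S" for \<beta>'
      using that \<open>S \<subseteq> ?K\<close> by (auto simp: min_face_def)
    then show False using X(3)[OF \<beta> w] by (auto simp: not_less[symmetric])
  qed
  moreover have "X \<subseteq> min_face w0 ?K" using X(1) S(1) by blast
  moreover have "r - 1 \<le> card X" using X(2) S(2) by linarith
  ultimately show ?thesis by (intro that)
qed

section \<open>Open convex sets of weights\<close>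

text \<open>Openness is only required along lines, which is all the argument uses.\<close>

definition convex_open :: "('n \<Rightarrow> real) set \<Rightarrow> bool" where
  "convex_open C \<longleftrightarrow>
     (\<forall>w\<in>C. \<forall>w'\<in>C. \<forall>t. 0 \<le> t \<and> t \<le> 1 \<longrightarrow> (\<lambda>l. (1 - t) * w l + t * w' l) \<in> C) \<and>
     (\<forall>w\<in>C. \<forall>v. \<exists>e>0. (\<lambda>l. w l + e * v l) \<in> C)"

lemma convex_openD:
  assumes "convex_open C"
  shows "w \<in> C \<Longrightarrow> w' \<in> C \<Longrightarrow> 0 \<le> t \<Longrightarrow> t \<le> 1 \<Longrightarrow> (\<lambda>l. (1 - t) * w l + t * w' l) \<in> C"
    and "w \<in> C \<Longrightarrow> \<exists>e>0. (\<lambda>l. w l + e * v l) \<in> C"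
  using assms by (auto simp: convex_open_def)

lemma convex_open_small_steps:
  assumes "convex_open C" "w \<in> C"
  obtains e0 where "e0 > 0" "\<And>e. 0 < e \<Longrightarrow> e \<le> e0 \<Longrightarrow> (\<lambda>l. w l + e * v l) \<in> C"
proof -
  obtain e0 where e0: "e0 > 0" "(\<lambda>l. w l + e0 * v l) \<in> C" using convex_openD(2)[OF assms] by blast
  have "(\<lambda>l. w l + e * v l) \<in> C" if "0 < e" "e \<le> e0" for e
  proof -
    have "(\<lambda>l. (1 - e / e0) * w l + e / e0 * (w l + e0 * v l)) \<in> C"
      using that e0 by (intro convex_openD(1)[OF assms(1) assms(2)]) auto
    moreover have "(\<lambda>l. (1 - e / e0) * w l + e / e0 * (w l + e0 * v l)) = (\<lambda>l. w l + e * v l)"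
      using e0 by (auto simp: field_simps)
    ultimately show ?thesis by simp
  qed
  with e0(1) show ?thesis by (rule that)
qed

definition side :: "('n::finite \<Rightarrow> real) set \<Rightarrow> ('n \<Rightarrow>\<^sub>0 nat) \<Rightarrow> ('n \<Rightarrow>\<^sub>0 nat) \<Rightarrow> ('n \<Rightarrow> real) set" where
  "side C a b = {w\<in>C. wdeg w b < wdeg w a}"

definition splits :: "('n::finite \<Rightarrow> real) set \<Rightarrow> ('n \<Rightarrow>\<^sub>0 nat) \<Rightarrow> ('n \<Rightarrow>\<^sub>0 nat) \<Rightarrow> bool" where
  "splits C a b \<longleftrightarrow> side C a b \<noteq> {} \<and> side C b a \<noteq> {}"

lemma side_subset: "side C a b \<subseteq> C"
  by (auto simp: side_def)

lemma splits_neq: "splits C a b \<Longrightarrow> a \<noteq> b"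
  by (auto simp: splits_def side_def)

lemma convex_open_side:
  assumes C: "convex_open C"
  shows "convex_open (side C a b)"
  unfolding convex_open_def
proof (intro conjI ballI allI impI)
  fix w w' and t :: real assume w: "w \<in> side C a b" and w': "w' \<in> side C a b" and t: "0 \<le> t \<and> t \<le> 1"
  have "(1 - t) * wdeg w b + t * wdeg w' b < (1 - t) * wdeg w a + t * wdeg w' a"
  proof (cases "t = 0")
    case False
    then have "t * wdeg w' b < t * wdeg w' a" using t w' by (simp add: side_def)
    moreover have "(1 - t) * wdeg w b \<le> (1 - t) * wdeg w a" using t w by (intro mult_left_mono) (auto simp: side_def)
    ultimately show ?thesis by linarith
  qed (use w in \<open>simp add: side_def\<close>)
  then show "(\<lambda>l. (1 - t) * w l + t * w' l) \<in> side C a b"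
    using convex_openD(1)[OF C, of w w' t] w w' t by (simp add: side_def)
next
  fix w v assume w: "w \<in> side C a b"
  then have "w \<in> C" and pos: "0 < wdeg w a - wdeg w b" by (auto simp: side_def)
  obtain e0 where e0: "e0 > 0" "\<And>e. 0 < e \<Longrightarrow> e \<le> e0 \<Longrightarrow> (\<lambda>l. w l + e * v l) \<in> C"
    using convex_open_small_steps[OF C \<open>w \<in> C\<close>] by blast
  define j where "j = wdeg v a - wdeg v b"
  define e where "e = min e0 ((wdeg w a - wdeg w b) / (\<bar>j\<bar> + 1))"
  have e: "0 < e" "e \<le> e0" using e0 pos by (auto simp: e_def)
  have "e * \<bar>j\<bar> < wdeg w a - wdeg w b"
  proof -
    have "e * \<bar>j\<bar> \<le> (wdeg w a - wdeg w b) / (\<bar>j\<bar> + 1) * \<bar>j\<bar>" by (rule mult_right_mono) (auto simp: e_def)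
    also have "\<dots> < wdeg w a - wdeg w b" using pos by (simp add: field_simps)
    finally show ?thesis .
  qed
  moreover have "- (e * \<bar>j\<bar>) \<le> e * j" using mult_left_mono[of "- \<bar>j\<bar>" j e] e by simp
  ultimately have "wdeg w b + e * wdeg v b < wdeg w a + e * wdeg v a"
    by (simp add: j_def algebra_simps)
  then show "\<exists>e>0. (\<lambda>l. w l + e * v l) \<in> side C a b"
    using e e0(2)[OF e] by (auto simp: side_def)
qed

lemma splits_imp_hyperplane:
  assumes C: "convex_open C" and "splits C a b"
  obtains w0 where "w0 \<in> C" "wdeg w0 a = wdeg w0 b"
proof -
  obtain w1 w2 where w1: "w1 \<in> C" "wdeg w1 b < wdeg w1 a" and w2: "w2 \<in> C" "wdeg w2 a < wdeg w2 b"
    using assms(2) by (auto simp: splits_def side_def)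
  define D1 D2 where "D1 = wdeg w1 a - wdeg w1 b" and "D2 = wdeg w2 a - wdeg w2 b"
  have D: "0 < D1" "D2 < 0" using w1 w2 by (simp_all add: D1_def D2_def)
  define t where "t = D1 / (D1 - D2)"
  have t: "0 \<le> t" "t \<le> 1" using D by (auto simp: t_def field_simps)
  have "(\<lambda>l. (1 - t) * w1 l + t * w2 l) \<in> C" using convex_openD(1)[OF C w1(1) w2(1) t] .
  moreover have "wdeg (\<lambda>l. (1 - t) * w1 l + t * w2 l) a - wdeg (\<lambda>l. (1 - t) * w1 l + t * w2 l) b
      = (1 - t) * D1 + t * D2"
    by (simp only: wdeg_weight_add wdeg_weight_scale D1_def D2_def) (simp add: algebra_simps)
  moreover have "(1 - t) * D1 + t * D2 = 0" using D by (simp add: t_def field_simps)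
  ultimately show ?thesis by (intro that) auto
qed

text \<open>Move a point of \<open>C\<close> on the hyperplane of \<open>{a, b}\<close> off the hyperplane of \<open>{c, d}\<close>, then
  perturb it in direction \<open>\<plusminus>(a - b)\<close> inside the side of \<open>C\<close> containing it.\<close>

lemma splits_side:
  fixes v :: "'n::finite \<Rightarrow> real"
  assumes C: "convex_open C" and s: "splits C a b"
    and v: "wdeg v a = wdeg v b" "wdeg v c \<noteq> wdeg v d"
  shows "splits (side C c d) a b \<or> splits (side C d c) a b"
proof -
  obtain w0 where w0: "w0 \<in> C" "wdeg w0 a = wdeg w0 b" using splits_imp_hyperplane[OF C s] by blast
  obtain w1 where w1: "w1 \<in> C" "wdeg w1 a = wdeg w1 b" "wdeg w1 c \<noteq> wdeg w1 d"
  proof (cases "wdeg w0 c = wdeg w0 d")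
    case True
    obtain e where "e > 0" "(\<lambda>l. w0 l + e * v l) \<in> C" using convex_openD(2)[OF C w0(1)] by blast
    with True w0 v show ?thesis by (intro that[of "\<lambda>l. w0 l + e * v l"]) auto
  next
    case False
    with w0 show ?thesis by (intro that) auto
  qed
  let ?x = "\<lambda>l. real_of_int (exp_diff a b l)"
  have x: "wdeg ?x b < wdeg ?x a" using wdeg_exp_diff_less[OF splits_neq[OF s]] .
  have "splits C' a b" if C': "C' = side C c d \<or> C' = side C d c" and w1C': "w1 \<in> C'" for C'
  proof -
    have "convex_open C'" using C' convex_open_side[OF C] by blast
    obtain e1 where e1: "e1 > 0" "\<And>e. 0 < e \<Longrightarrow> e \<le> e1 \<Longrightarrow> (\<lambda>l. w1 l + e * ?x l) \<in> C'"
      using convex_open_small_steps[OF \<open>convex_open C'\<close> w1C', where v = ?x] by blast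
    obtain e2 where e2: "e2 > 0" "\<And>e. 0 < e \<Longrightarrow> e \<le> e2 \<Longrightarrow> (\<lambda>l. w1 l + e * - ?x l) \<in> C'"
      using convex_open_small_steps[OF \<open>convex_open C'\<close> w1C', where v = "\<lambda>l. - ?x l"] by blast
    define e where "e = min e1 e2"
    have e: "0 < e" "e \<le> e1" "e \<le> e2" using e1 e2 by (simp_all add: e_def)
    have "e * wdeg ?x b < e * wdeg ?x a" using e x by simp
    then have "(\<lambda>l. w1 l + e * ?x l) \<in> side C' a b" "(\<lambda>l. w1 l + e * - ?x l) \<in> side C' b a"
      using e1(2)[OF e(1,2)] e2(2)[OF e(1,3)] w1(2) by (simp_all add: side_def)
    then show ?thesis by (auto simp: splits_def)
  qed
  moreover have "w1 \<in> side C c d \<or> w1 \<in> side C d c" using w1 by (auto simp: side_def)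
  ultimately show ?thesis by blast
qed

definition exposed :: "('n::finite \<Rightarrow> real) set \<Rightarrow> ('n \<Rightarrow>\<^sub>0 nat) set \<Rightarrow> ('n \<Rightarrow>\<^sub>0 nat) set" where
  "exposed C S = (\<Union>w\<in>C. min_face w S)"

lemma exposed_subset: "exposed C S \<subseteq> S"
  by (auto simp: exposed_def min_face_def)

lemma finite_exposed: "finite S \<Longrightarrow> finite (exposed C S)"
  using exposed_subset by (rule finite_subset)

lemma one_le_card_exposed:
  assumes "C \<noteq> {}" "p \<noteq> 0"
  shows "1 \<le> card (exposed C (Poly_Mapping.keys p))"
proof -
  obtain w where "w \<in> C" using assms(1) by blast
  then have "min_face w (Poly_Mapping.keys p) \<subseteq> exposed C (Poly_Mapping.keys p)"
    by (auto simp: exposed_def)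
  moreover have "min_face w (Poly_Mapping.keys p) \<noteq> {}" using assms(2) by (simp add: min_face_nonempty)
  ultimately show ?thesis using finite_exposed[of "Poly_Mapping.keys p" C]
    by (metis One_nat_def Suc_leI card_gt_0_iff finite_keys subset_empty)
qed

lemma exposed_side_binom_pow_mult:
  fixes q :: "'n::finite intpoly"
  assumes "q \<noteq> 0"
  shows "exposed (side C a b) (Poly_Mapping.keys (binom a b ^ r * q)) =
    (+) (\<Sum>i<r. b) ` exposed (side C a b) (Poly_Mapping.keys q)"
  using min_face_binom_pow_mult[OF assms] by (auto simp: exposed_def side_def)

lemma card_exposed_binom_pow_mult:
  fixes q :: "'n::finite intpoly"
  assumes C: "convex_open C" and s: "splits C a b" and q: "q \<noteq> 0" and r: "r \<ge> 1"
  shows "card (exposed (side C a b) (Poly_Mapping.keys q)) + card (exposed (side C b a) (Poly_Mapping.keys q)) + (r - 1)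
    \<le> card (exposed C (Poly_Mapping.keys (binom a b ^ r * q)))"
proof -
  let ?K = "Poly_Mapping.keys (binom a b ^ r * q)"
  let ?P = "exposed (side C a b) ?K" and ?M = "exposed (side C b a) ?K"
  have ab: "a \<noteq> b" using splits_neq[OF s] .
  have "?P = (+) (\<Sum>i<r. b) ` exposed (side C a b) (Poly_Mapping.keys q)"
    by (rule exposed_side_binom_pow_mult[OF q])
  then have card_P: "card ?P = card (exposed (side C a b) (Poly_Mapping.keys q))"
    by (simp add: card_image)
  have "?M = (+) (\<Sum>i<r. a) ` exposed (side C b a) (Poly_Mapping.keys q)"
    using exposed_side_binom_pow_mult[OF q, of C b a r] by (simp add: keys_binom_swap_pow_mult)
  then have card_M: "card ?M = card (exposed (side C b a) (Poly_Mapping.keys q))"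
    by (simp add: card_image)
  have "?P \<inter> ?M = {}"
    using min_face_binom_pow_mult_disjoint[OF q r] by (fastforce simp: exposed_def side_def)
  obtain w0 where w0: "w0 \<in> C" "wdeg w0 a = wdeg w0 b" by (rule splits_imp_hyperplane[OF C s])
  obtain X where X: "X \<subseteq> min_face w0 ?K" "r - 1 \<le> card X"
    "\<And>\<beta> w. \<beta> \<in> X \<Longrightarrow> wdeg w a \<noteq> wdeg w b \<Longrightarrow> \<beta> \<notin> min_face w ?K"
    using obtain_keys_hidden_off_hyperplane[OF ab q w0(2), where r = r] by blast
  have "X \<inter> (?P \<union> ?M) = {}" using X(3) by (fastforce simp: exposed_def side_def)
  have sub: "?P \<union> ?M \<union> X \<subseteq> exposed C ?K"
    using X(1) w0(1) side_subset by (fastforce simp: exposed_def)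
  have fin: "finite (exposed C ?K)" by (simp add: finite_exposed)
  then have "finite ?P" "finite ?M" "finite X" using sub by (auto intro: finite_subset)
  then have "card (?P \<union> ?M \<union> X) = card ?P + card ?M + card X"
    using \<open>?P \<inter> ?M = {}\<close> \<open>X \<inter> (?P \<union> ?M) = {}\<close> by (simp add: card_Un_disjoint Int_commute)
  moreover have "card (?P \<union> ?M \<union> X) \<le> card (exposed C ?K)" by (rule card_mono[OF fin sub])
  ultimately show ?thesis using card_P card_M X(2) by linarith
qed

section \<open>Irreducible binomials\<close>

lemma poly_mapping_add_eq_0D: "(x :: 'n \<Rightarrow>\<^sub>0 nat) + y = 0 \<Longrightarrow> x = 0"
  by (metis add_is_0 lookup_add lookup_zero poly_mapping_eqI)

lemma not_unit_if_keys_nonzero: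
  fixes p :: "'n::finite intpoly"
  assumes "\<And>k. k \<in> Poly_Mapping.keys p \<Longrightarrow> k \<noteq> 0"
  shows "\<not> p dvd 1"
proof
  assume "p dvd 1"
  then obtain u where u: "1 = p * u" by (elim dvdE)
  have "0 \<in> Poly_Mapping.keys (p * u)" unfolding u[symmetric] by simp
  then obtain x y where "0 = x + y" "x \<in> Poly_Mapping.keys p" using keys_mult[of p u] by blast
  then show False using assms poly_mapping_add_eq_0D by metis
qed

lemma not_unit_binom:
  fixes a b :: "'n::finite \<Rightarrow>\<^sub>0 nat"
  assumes "a \<noteq> b"
  shows "\<not> binom a b dvd 1"
proof
  assume "binom a b dvd 1"
  then obtain u where u: "1 = binom a b * u" by (elim dvdE)
  then have "u \<noteq> 0" by auto
  have "2 \<le> card (Poly_Mapping.keys (binom a b * u))"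
    using two_le_card_keys_binom_pow_mult[OF \<open>u \<noteq> 0\<close> _ assms, of 1] by simp
  then show False by (simp flip: u)
qed

lemma irreducible_binom_neq: "irreducible (binom a b) \<Longrightarrow> a \<noteq> b"
  by (auto simp: binom_def)

lemma irreducible_binom_disjoint:
  fixes a b :: "'n::finite \<Rightarrow>\<^sub>0 nat"
  assumes irr: "irreducible (binom a b)"
  shows "Poly_Mapping.lookup a l = 0 \<or> Poly_Mapping.lookup b l = 0"
proof (rule ccontr)
  assume both: "\<not> ?thesis"
  define e where "e = (Poly_Mapping.single l 1 :: 'n \<Rightarrow>\<^sub>0 nat)"
  have a: "a = e + (a - e)" and b: "b = e + (b - e)"
    using both by (auto simp: e_def lookup_add lookup_minus lookup_single when_def intro!: poly_mapping_eqI)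
  have "binom a b = Poly_Mapping.single e 1 * binom (a - e) (b - e)"
    by (subst a, subst b) (simp add: binom_def right_diff_distrib mult_single)
  moreover have "\<not> Poly_Mapping.single e (1::int) dvd 1"
  proof (rule not_unit_if_keys_nonzero)
    have "Poly_Mapping.lookup e l = 1" by (simp add: e_def)
    then show "k \<noteq> 0" if "k \<in> Poly_Mapping.keys (Poly_Mapping.single e (1::int))" for k
      using that by auto
  qed
  moreover have "\<not> binom (a - e) (b - e) dvd 1"
    using irreducible_binom_neq[OF irr] a b by (metis not_unit_binom)
  ultimately show False using irreducibleD[OF irr] by blast
qed

lemma single_one_power: "Poly_Mapping.single c (1::int) ^ n = Poly_Mapping.single (\<Sum>i<n. c) 1"
  by (induction n) (simp_all add: mult_single add.commute)

lemma sum_const_poly_mapping_eq_0D: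
  fixes n :: nat
  assumes "(\<Sum>i<n. c :: 'n \<Rightarrow>\<^sub>0 nat) = 0"
  shows "n = 0 \<or> c = 0"
proof -
  have "n * Poly_Mapping.lookup c l = 0" for l
    using arg_cong[OF assms, of "\<lambda>p. Poly_Mapping.lookup p l"] by (simp add: lookup_sum)
  then show ?thesis by (auto intro: poly_mapping_eqI)
qed

text \<open>If \<open>g \<ge> 2\<close> divides all exponents, then \<open>X\<^sup>a - X\<^sup>b\<close> is a difference of \<open>g\<close>-th powers and factors.\<close>

lemma irreducible_binom_no_common_factor:
  fixes a b :: "'n::finite \<Rightarrow>\<^sub>0 nat"
  assumes irr: "irreducible (binom a b)" and a0: "a \<noteq> 0" and b0: "b \<noteq> 0"
    and g: "g \<ge> 2" and dvd: "\<And>l. g dvd Poly_Mapping.lookup a l \<and> g dvd Poly_Mapping.lookup b l"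
  shows False
proof -
  define a' where "a' = Poly_Mapping.map (\<lambda>x. x div g) a"
  define b' where "b' = Poly_Mapping.map (\<lambda>x. x div g) b"
  have aa: "a = (\<Sum>i<g. a')" and bb: "b = (\<Sum>i<g. b')"
    using dvd by (auto simp: a'_def b'_def lookup_sum map.rep_eq when_def intro!: poly_mapping_eqI)
  have "a' \<noteq> 0" "b' \<noteq> 0" "a' \<noteq> b'" using a0 b0 irreducible_binom_neq[OF irr] aa bb by auto
  define x where "x = (Poly_Mapping.single a' 1 :: 'n intpoly)"
  define y where "y = (Poly_Mapping.single b' 1 :: 'n intpoly)"
  define S where "S = (\<Sum>i<g. y ^ (g - Suc i) * x ^ i)"
  have "binom a b = x ^ g - y ^ g"
    by (simp add: binom_def x_def y_def single_one_power aa[symmetric] bb[symmetric])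
  also have "\<dots> = binom a' b' * S"
    unfolding S_def power_diff_sumr2 by (simp add: binom_def x_def y_def)
  finally have factor: "binom a b = binom a' b' * S" .
  have "\<not> S dvd 1"
  proof (rule not_unit_if_keys_nonzero)
    fix k assume "k \<in> Poly_Mapping.keys S"
    then obtain i where i: "i < g" "k \<in> Poly_Mapping.keys (y ^ (g - Suc i) * x ^ i)"
      using keys_sum[of "\<lambda>i. y ^ (g - Suc i) * x ^ i" "{..<g}"] unfolding S_def by blast
    then have k: "k = (\<Sum>j<g - Suc i. b') + (\<Sum>j<i. a')"
      by (simp add: x_def y_def single_one_power mult_single)
    show "k \<noteq> 0"
    proof
      assume "k = 0"
      then have "(\<Sum>j<g - Suc i. b') = 0" "(\<Sum>j<i. a') = 0"
        using k poly_mapping_add_eq_0D by (metis add.commute)+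
      then show False
        using \<open>a' \<noteq> 0\<close> \<open>b' \<noteq> 0\<close> g i(1) sum_const_poly_mapping_eq_0D by (cases "i = 0") fastforce+
    qed
  qed
  then show False using irreducibleD[OF irr factor] not_unit_binom[OF \<open>a' \<noteq> b'\<close>] by blast
qed

lemma irreducible_binom_exp_diff_primitive:
  fixes a b :: "'n::finite \<Rightarrow>\<^sub>0 nat"
  assumes irr: "irreducible (binom a b)" and a0: "a \<noteq> 0" and b0: "b \<noteq> 0"
    and dvd: "\<And>l. g dvd exp_diff a b l"
  shows "g = 1 \<or> g = - 1"
proof -
  have dvd_ab: "g dvd int (Poly_Mapping.lookup a l) \<and> g dvd int (Poly_Mapping.lookup b l)" for l
    using dvd[of l] irreducible_binom_disjoint[OF irr, of l] by (auto simp: exp_diff_def)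
  have "g \<noteq> 0"
  proof
    assume "g = 0"
    then have "a = 0" using dvd_ab by (auto intro: poly_mapping_eqI)
    with a0 show False ..
  qed
  have "\<not> 2 \<le> nat \<bar>g\<bar>"
  proof
    assume "2 \<le> nat \<bar>g\<bar>"
    moreover have "nat \<bar>g\<bar> dvd Poly_Mapping.lookup a l \<and> nat \<bar>g\<bar> dvd Poly_Mapping.lookup b l" for l
      using dvd_ab[of l] by (simp add: nat_dvd_iff)
    ultimately show False using irreducible_binom_no_common_factor[OF irr a0 b0] by blast
  qed
  then show ?thesis using \<open>g \<noteq> 0\<close> by linarith
qed

lemma primitive_parallel_eq:
  fixes d d' :: "'n \<Rightarrow> int"
  assumes l0: "d l0 \<noteq> 0" and minors: "\<And>l m. d m * d' l = d l * d' m"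
    and prim: "\<And>g. (\<And>l. g dvd d l) \<Longrightarrow> g = 1 \<or> g = - 1"
    and prim': "\<And>g. (\<And>l. g dvd d' l) \<Longrightarrow> g = 1 \<or> g = - 1"
  shows "d' = d \<or> d' = (\<lambda>l. - d l)"
proof -
  define G where "G = gcd (d l0) (d' l0)"
  have "G \<noteq> 0" using l0 by (simp add: G_def)
  define c c' where "c = d l0 div G" and "c' = d' l0 div G"
  have "coprime c c'"
    unfolding c_def c'_def G_def by (rule div_gcd_coprime) (use l0 in simp)
  have dG: "d l0 = G * c" "d' l0 = G * c'" unfolding c_def c'_def G_def by simp_all
  have eq: "c * d' l = c' * d l" for l
  proof -
    have "G * (c * d' l) = G * (c' * d l)"
      using minors[of l l0] unfolding dG by (metis mult.assoc mult.commute)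
    then show ?thesis using mult_left_cancel[OF \<open>G \<noteq> 0\<close>] by blast
  qed
  have "c dvd d l" for l
    using eq[of l] \<open>coprime c c'\<close> by (metis coprime_dvd_mult_right_iff dvd_triv_left)
  then have c: "c = 1 \<or> c = - 1" by (rule prim)
  have "c' dvd d' l" for l
    using eq[of l] \<open>coprime c c'\<close> by (metis coprime_commute coprime_dvd_mult_right_iff dvd_triv_left)
  then have c': "c' = 1 \<or> c' = - 1" by (rule prim')
  show ?thesis using c c' eq by (auto simp: fun_eq_iff) (metis minus_mult_minus mult_1 mult_minus1)+
qed

lemma lookup_eq_nat_exp_diff:
  assumes "Poly_Mapping.lookup a l = 0 \<or> Poly_Mapping.lookup b l = 0"
  shows "Poly_Mapping.lookup a l = nat (exp_diff a b l)" "Poly_Mapping.lookup b l = nat (- exp_diff a b l)"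
  using assms by (auto simp: exp_diff_def)

definition nonparallel :: "('n::finite \<Rightarrow>\<^sub>0 nat) \<Rightarrow> ('n \<Rightarrow>\<^sub>0 nat) \<Rightarrow> ('n \<Rightarrow>\<^sub>0 nat) \<Rightarrow> ('n \<Rightarrow>\<^sub>0 nat) \<Rightarrow> bool" where
  "nonparallel a b c d \<longleftrightarrow> (\<exists>v::'n \<Rightarrow> real. wdeg v a = wdeg v b \<and> wdeg v c \<noteq> wdeg v d)"

lemma irreducible_binoms_eq_or_nonparallel:
  fixes a b c d :: "'n::finite \<Rightarrow>\<^sub>0 nat"
  assumes irr: "irreducible (binom a b)" and irr': "irreducible (binom c d)"
    and nz: "a \<noteq> 0" "b \<noteq> 0" "c \<noteq> 0" "d \<noteq> 0"
  shows "(c = a \<and> d = b) \<or> (c = b \<and> d = a) \<or> nonparallel a b c d"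
proof (cases "\<exists>l m. exp_diff a b m * exp_diff c d l \<noteq> exp_diff a b l * exp_diff c d m")
  case True
  then obtain l m where lm: "exp_diff a b m * exp_diff c d l \<noteq> exp_diff a b l * exp_diff c d m" by blast
  let ?v = "minor_weight (exp_diff a b) l m"
  have diff: "wdeg ?v c - wdeg ?v d = of_int (exp_diff a b m * exp_diff c d l - exp_diff a b l * exp_diff c d m)"
    by (simp add: wdeg_minor_weight exp_diff_def algebra_simps)
  have "wdeg ?v c - wdeg ?v d \<noteq> 0" unfolding diff of_int_eq_0_iff using lm by simp
  then have "wdeg ?v c \<noteq> wdeg ?v d" by simp
  then show ?thesis unfolding nonparallel_def using wdeg_minor_weight_exp_diff[of a b l m] by blast
next
  case False
  obtain l0 where l0: "exp_diff a b l0 \<noteq> 0"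
    using irreducible_binom_neq[OF irr] exp_diff_eq_0_iff by blast
  have minors: "\<And>l m. exp_diff a b m * exp_diff c d l = exp_diff a b l * exp_diff c d m"
    using False by blast
  have ab: "Poly_Mapping.lookup a l = nat (exp_diff a b l)" "Poly_Mapping.lookup b l = nat (- exp_diff a b l)"
    for l by (rule lookup_eq_nat_exp_diff[OF irreducible_binom_disjoint[OF irr]])+
  have cd: "Poly_Mapping.lookup c l = nat (exp_diff c d l)" "Poly_Mapping.lookup d l = nat (- exp_diff c d l)"
    for l by (rule lookup_eq_nat_exp_diff[OF irreducible_binom_disjoint[OF irr']])+
  have "exp_diff c d = exp_diff a b \<or> exp_diff c d = (\<lambda>l. - exp_diff a b l)"
    by (rule primitive_parallel_eq[of "exp_diff a b" l0 "exp_diff c d", OF l0 minors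
          irreducible_binom_exp_diff_primitive[OF irr nz(1,2)] irreducible_binom_exp_diff_primitive[OF irr' nz(3,4)]])
  then show ?thesis
  proof
    assume e: "exp_diff c d = exp_diff a b"
    have "c = a" "d = b" by (rule poly_mapping_eqI, simp add: ab cd e)+
    then show ?thesis by blast
  next
    assume e: "exp_diff c d = (\<lambda>l. - exp_diff a b l)"
    have "c = b" "d = a" by (rule poly_mapping_eqI, simp add: ab cd e)+
    then show ?thesis by blast
  qed
qed

section \<open>Counting exposed keys\<close>

lemma prod_eq_power_or_uminus_power:
  fixes f :: "'i \<Rightarrow> 'a::comm_ring_1"
  assumes "finite R" "\<And>i. i \<in> R \<Longrightarrow> f i = x \<or> f i = - x"
  shows "prod f R = x ^ card R \<or> prod f R = - (x ^ card R)"
  using assms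
proof (induction R rule: finite_induct)
  case (insert i R)
  then have "prod f R = x ^ card R \<or> prod f R = - (x ^ card R)" "f i = x \<or> f i = - x" by blast+
  then show ?case using insert.hyps by (auto simp: algebra_simps)
qed simp

lemma prod_binom_mult_nonzero:
  fixes A B :: "'i \<Rightarrow> ('n::finite \<Rightarrow>\<^sub>0 nat)"
  assumes "finite I" "\<And>i. i \<in> I \<Longrightarrow> A i \<noteq> B i" "g \<noteq> 0"
  shows "(\<Prod>i\<in>I. binom (A i) (B i)) * g \<noteq> 0"
  using assms by (induction I rule: finite_induct) (simp_all add: mult.assoc binom_mult_nonzero)

lemma keys_prod_binom_mult_eq_pow:
  fixes A B :: "'i \<Rightarrow> ('n::finite \<Rightarrow>\<^sub>0 nat)"
  assumes "finite R" "\<And>i. i \<in> R \<Longrightarrow> (A i = a \<and> B i = b) \<or> (A i = b \<and> B i = a)"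
  shows "Poly_Mapping.keys ((\<Prod>i\<in>R. binom (A i) (B i)) * q) = Poly_Mapping.keys (binom a b ^ card R * q)"
proof -
  have "binom (A i) (B i) = binom a b \<or> binom (A i) (B i) = - binom a b" if "i \<in> R" for i
    using assms(2)[OF that] binom_swap[of b a] by auto
  then have "(\<Prod>i\<in>R. binom (A i) (B i)) = binom a b ^ card R \<or>
      (\<Prod>i\<in>R. binom (A i) (B i)) = - (binom a b ^ card R)"
    by (rule prod_eq_power_or_uminus_power[OF assms(1)])
  then show ?thesis by (elim disjE) (simp_all only: keys_minus mult_minus_left)
qed

lemma splits_subset_sides:
  fixes a b :: "'n::finite \<Rightarrow>\<^sub>0 nat"
  assumes "convex_open C" "splits C a b"
    and "\<And>i. i \<in> I \<Longrightarrow> nonparallel (A i) (B i) a b"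
  shows "{i\<in>I. splits C (A i) (B i)} \<subseteq>
    {i\<in>I. splits (side C a b) (A i) (B i)} \<union> {i\<in>I. splits (side C b a) (A i) (B i)}"
proof
  fix i assume i: "i \<in> {i\<in>I. splits C (A i) (B i)}"
  then obtain v :: "'n \<Rightarrow> real" where "wdeg v (A i) = wdeg v (B i)" "wdeg v a \<noteq> wdeg v b"
    using assms(3) by (auto simp: nonparallel_def)
  then have "splits (side C a b) (A i) (B i) \<or> splits (side C b a) (A i) (B i)"
    using splits_side[OF assms(1)] i by blast
  then show "i \<in> {i\<in>I. splits (side C a b) (A i) (B i)} \<union> {i\<in>I. splits (side C b a) (A i) (B i)}"
    using i by blast
qed

lemma card_exposed_prod_binom_mult:
  fixes A B :: "'i \<Rightarrow> ('n::finite \<Rightarrow>\<^sub>0 nat)"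
  assumes "finite I" "\<And>i. i \<in> I \<Longrightarrow> A i \<noteq> B i"
    and "\<And>i j. i \<in> I \<Longrightarrow> j \<in> I \<Longrightarrow>
      (A j = A i \<and> B j = B i) \<or> (A j = B i \<and> B j = A i) \<or> nonparallel (A i) (B i) (A j) (B j)"
    and "convex_open C" "C \<noteq> {}" "g \<noteq> 0"
  shows "1 + card {i\<in>I. splits C (A i) (B i)} \<le>
    card (exposed C (Poly_Mapping.keys ((\<Prod>i\<in>I. binom (A i) (B i)) * g)))"
  using assms
proof (induction I arbitrary: C g rule: finite_psubset_induct)
  case (psubset I)
  let ?p = "(\<Prod>i\<in>I. binom (A i) (B i)) * g"
  have p0: "?p \<noteq> 0" using prod_binom_mult_nonzero psubset.prems psubset.hyps(1) by blast
  show ?case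
  proof (cases "\<exists>k\<in>I. splits C (A k) (B k)")
    case False
    then have "card {i\<in>I. splits C (A i) (B i)} = 0" by (simp add: card_eq_0_iff)
    then show ?thesis using one_le_card_exposed[OF psubset.prems(4) p0] by simp
  next
    case True
    then obtain k where k: "k \<in> I" "splits C (A k) (B k)" by blast
    define R where "R = {i\<in>I. (A i = A k \<and> B i = B k) \<or> (A i = B k \<and> B i = A k)}"
    define I' where "I' = I - R"
    define q where "q = (\<Prod>i\<in>I'. binom (A i) (B i)) * g"
    let ?C1 = "side C (A k) (B k)" and ?C2 = "side C (B k) (A k)"
    let ?S = "\<lambda>C J. {i\<in>J. splits C (A i) (B i)}"
    have "R \<subseteq> I" "k \<in> R" using k(1) by (auto simp: R_def)
    have "finite R" using \<open>R \<subseteq> I\<close> psubset.hyps(1) by (rule finite_subset)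
    then have "card R \<ge> 1" using \<open>k \<in> R\<close> by (auto simp: Suc_le_eq card_gt_0_iff)
    have "I' \<subset> I" "finite I'" using \<open>k \<in> R\<close> k(1) psubset.hyps(1) by (auto simp: I'_def)
    have ne': "\<And>i. i \<in> I' \<Longrightarrow> A i \<noteq> B i" using psubset.prems(1) by (simp add: I'_def)
    have pw': "\<And>i j. i \<in> I' \<Longrightarrow> j \<in> I' \<Longrightarrow>
        (A j = A i \<and> B j = B i) \<or> (A j = B i \<and> B j = A i) \<or> nonparallel (A i) (B i) (A j) (B j)"
      using psubset.prems(2) unfolding I'_def by blast
    have "q \<noteq> 0" unfolding q_def by (rule prod_binom_mult_nonzero[OF \<open>finite I'\<close> ne' psubset.prems(5)])
    have "?p = (\<Prod>i\<in>R. binom (A i) (B i)) * q"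
      unfolding q_def I'_def prod.subset_diff[OF \<open>R \<subseteq> I\<close> psubset.hyps(1)] by (simp add: ac_simps)
    then have "Poly_Mapping.keys ?p = Poly_Mapping.keys (binom (A k) (B k) ^ card R * q)"
      using keys_prod_binom_mult_eq_pow[OF \<open>finite R\<close>, where a = "A k" and b = "B k"] by (simp add: R_def)
    then have main: "card (exposed ?C1 (Poly_Mapping.keys q)) + card (exposed ?C2 (Poly_Mapping.keys q))
        + (card R - 1) \<le> card (exposed C (Poly_Mapping.keys ?p))"
      using card_exposed_binom_pow_mult[OF psubset.prems(3) k(2) \<open>q \<noteq> 0\<close> \<open>card R \<ge> 1\<close>] by simp
    have "1 + card (?S C' I') \<le> card (exposed C' (Poly_Mapping.keys q))" if "C' = ?C1 \<or> C' = ?C2" for C'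
    proof -
      have C': "convex_open C'" "C' \<noteq> {}"
        using that k(2) convex_open_side[OF psubset.prems(3)] by (auto simp: splits_def)
      show ?thesis
        using psubset.IH[OF \<open>I' \<subset> I\<close> ne' pw' C' psubset.prems(5)] unfolding q_def .
    qed
    then have IH: "1 + card (?S ?C1 I') \<le> card (exposed ?C1 (Poly_Mapping.keys q))"
      "1 + card (?S ?C2 I') \<le> card (exposed ?C2 (Poly_Mapping.keys q))" by blast+
    have "nonparallel (A i) (B i) (A k) (B k)" if "i \<in> I'" for i
      using psubset.prems(2)[of i k] that k(1) by (auto simp: I'_def R_def)
    then have "?S C I' \<subseteq> ?S ?C1 I' \<union> ?S ?C2 I'" by (rule splits_subset_sides[OF psubset.prems(3) k(2)])
    moreover have "?S C I \<subseteq> R \<union> ?S C I'" by (auto simp: I'_def)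
    ultimately have "?S C I \<subseteq> R \<union> ?S ?C1 I' \<union> ?S ?C2 I'" by blast
    then have "card (?S C I) \<le> card (R \<union> ?S ?C1 I' \<union> ?S ?C2 I')"
      using \<open>finite R\<close> \<open>finite I'\<close> by (intro card_mono) simp_all
    also have "\<dots> \<le> card R + card (?S ?C1 I') + card (?S ?C2 I')"
      using card_Un_le[of "R \<union> ?S ?C1 I'" "?S ?C2 I'"] card_Un_le[of R "?S ?C1 I'"] by linarith
    finally show ?thesis using main IH \<open>card R \<ge> 1\<close> by linarith
  qed
qed

definition pos_weights :: "('n \<Rightarrow> real) set" where
  "pos_weights = {w. \<forall>l. 0 < w l}"

lemma pos_weights_nonempty: "pos_weights \<noteq> {}"
  by (auto simp: pos_weights_def intro!: exI[of _ "\<lambda>_. 1"])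

lemma convex_open_pos_weights: "convex_open (pos_weights :: ('n::finite \<Rightarrow> real) set)"
  unfolding convex_open_def
proof (intro conjI ballI allI impI)
  fix w w' :: "'n \<Rightarrow> real" and t :: real
  assume w: "w \<in> pos_weights" and w': "w' \<in> pos_weights" and t: "0 \<le> t \<and> t \<le> 1"
  have "0 < (1 - t) * w l + t * w' l" for l
  proof (cases "t = 0")
    case False
    then have "0 < t * w' l" using t w' by (simp add: pos_weights_def)
    moreover have "0 \<le> (1 - t) * w l" using t w by (simp add: pos_weights_def less_imp_le)
    ultimately show ?thesis by linarith
  qed (use w in \<open>simp add: pos_weights_def\<close>)
  then show "(\<lambda>l. (1 - t) * w l + t * w' l) \<in> pos_weights" by (simp add: pos_weights_def)
next
  fix w v :: "'n \<Rightarrow> real" assume w: "w \<in> pos_weights"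
  define e where "e = Min (range (\<lambda>l. w l / (\<bar>v l\<bar> + 1)))"
  have e: "0 < e" "e \<le> w l / (\<bar>v l\<bar> + 1)" for l
    using w by (auto simp: e_def pos_weights_def)
  have "0 < w l + e * v l" for l
  proof -
    have "e * \<bar>v l\<bar> \<le> w l / (\<bar>v l\<bar> + 1) * \<bar>v l\<bar>" by (rule mult_right_mono[OF e(2)]) simp
    also have "\<dots> < w l" using w by (simp add: pos_weights_def field_simps)
    finally have "e * \<bar>v l\<bar> < w l" .
    moreover have "- (e * \<bar>v l\<bar>) \<le> e * v l" using mult_left_mono[of "- \<bar>v l\<bar>" "v l" e] e(1) by simp
    ultimately show ?thesis by linarith
  qed
  then show "\<exists>e>0. (\<lambda>l. w l + e * v l) \<in> pos_weights" using e(1) by (auto simp: pos_weights_def)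
qed

lemma ex_pos_weight_less:
  fixes a b :: "'n::finite \<Rightarrow>\<^sub>0 nat"
  assumes disj: "\<And>l. Poly_Mapping.lookup a l = 0 \<or> Poly_Mapping.lookup b l = 0" and "a \<noteq> 0"
  shows "\<exists>w\<in>pos_weights. wdeg w b < wdeg w a"
proof -
  define N :: real where "N = 1 + wdeg (\<lambda>_. 1) b"
  have "N \<ge> 1" by (simp add: N_def wdeg_def sum_nonneg)
  define w where "w = (\<lambda>l. if Poly_Mapping.lookup a l = 0 then 1 else N)"
  have "w \<in> pos_weights" using \<open>N \<ge> 1\<close> by (simp add: w_def pos_weights_def)
  have "wdeg w b = wdeg (\<lambda>_. 1) b"
    unfolding wdeg_def
  proof (rule sum.cong)
    show "w l * real (Poly_Mapping.lookup b l) = 1 * real (Poly_Mapping.lookup b l)" for l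
      using disj[of l] by (auto simp: w_def)
  qed simp
  also have "\<dots> < N" by (simp add: N_def)
  also have "N \<le> wdeg w a"
  proof -
    obtain l where "Poly_Mapping.lookup a l \<noteq> 0" using \<open>a \<noteq> 0\<close> by (metis lookup_zero poly_mapping_eqI)
    then have "N \<le> w l * real (Poly_Mapping.lookup a l)" using \<open>N \<ge> 1\<close> by (simp add: w_def)
    also have "\<dots> \<le> wdeg w a"
      unfolding wdeg_def using \<open>N \<ge> 1\<close> by (intro member_le_sum) (auto simp: w_def)
    finally show ?thesis .
  qed
  finally show ?thesis using \<open>w \<in> pos_weights\<close> by blast
qed

lemma splits_pos_weights:
  fixes a b :: "'n::finite \<Rightarrow>\<^sub>0 nat"
  assumes irr: "irreducible (binom a b)" and "a \<noteq> 0" "b \<noteq> 0"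
  shows "splits pos_weights a b"
proof -
  have "Poly_Mapping.lookup a l = 0 \<or> Poly_Mapping.lookup b l = 0" for l
    by (rule irreducible_binom_disjoint[OF irr])
  then have "\<exists>w\<in>pos_weights. wdeg w b < wdeg w a" "\<exists>w\<in>pos_weights. wdeg w a < wdeg w b"
    using ex_pos_weight_less[of a b] ex_pos_weight_less[of b a] assms(2,3) by (metis disj_commute)+
  then show ?thesis by (auto simp: splits_def side_def)
qed

lemma wdeg_less_if_le_comp:
  assumes "\<forall>l. 0 < w l" "le_comp \<beta>' \<beta>" "\<beta>' \<noteq> \<beta>"
  shows "wdeg w \<beta>' < (wdeg w \<beta> :: real)"
proof -
  obtain l where l: "Poly_Mapping.lookup \<beta>' l \<noteq> Poly_Mapping.lookup \<beta> l"
    using assms(3) by (meson poly_mapping_eqI)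
  have le: "Poly_Mapping.lookup \<beta>' i \<le> Poly_Mapping.lookup \<beta> i" for i
    using assms(2) by (simp add: le_comp_def)
  show ?thesis
    unfolding wdeg_def
  proof (rule sum_strict_mono_ex1)
    show "\<forall>i\<in>UNIV. w i * real (Poly_Mapping.lookup \<beta>' i) \<le> w i * real (Poly_Mapping.lookup \<beta> i)"
      using assms(1) le by (simp add: less_imp_le)
    show "\<exists>i\<in>UNIV. w i * real (Poly_Mapping.lookup \<beta>' i) < w i * real (Poly_Mapping.lookup \<beta> i)"
      using assms(1) le[of l] l by (intro bexI[of _ l]) simp_all
  qed simp
qed

lemma exposed_pos_weights_subset_minimal_monomials:
  "exposed pos_weights (Poly_Mapping.keys p) \<subseteq> minimal_monomials p"
proof
  fix \<beta> assume "\<beta> \<in> exposed pos_weights (Poly_Mapping.keys p)"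
  then obtain w where w: "\<forall>l. 0 < w l" "\<beta> \<in> min_face w (Poly_Mapping.keys p)"
    by (auto simp: exposed_def pos_weights_def)
  then show "\<beta> \<in> minimal_monomials p"
    using wdeg_less_if_le_comp[OF w(1)]
    by (fastforce simp: minimal_monomials_def min_face_def in_keys_iff not_less[symmetric])
qed

lemma sum_single_nonzero:
  fixes e :: "'j \<Rightarrow> int" and \<alpha> :: "'j \<Rightarrow> ('n \<Rightarrow>\<^sub>0 nat)"
  assumes "finite J" "J \<noteq> {}" and e: "\<And>j. j \<in> J \<Longrightarrow> e j = 1 \<or> e j = -1"
    and sep: "\<And>j j'. j \<in> J \<Longrightarrow> j' \<in> J \<Longrightarrow> e j \<noteq> e j' \<Longrightarrow> \<alpha> j \<noteq> \<alpha> j'"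
  shows "(\<Sum>j\<in>J. Poly_Mapping.single (\<alpha> j) (e j)) \<noteq> 0"
proof -
  obtain j0 where j0: "j0 \<in> J" using assms(2) by blast
  let ?J0 = "{j\<in>J. \<alpha> j = \<alpha> j0}"
  have "Poly_Mapping.lookup (\<Sum>j\<in>J. Poly_Mapping.single (\<alpha> j) (e j)) (\<alpha> j0) = (\<Sum>j\<in>?J0. e j)"
    using assms(1) by (simp add: lookup_sum lookup_single when_def sum.inter_filter)
  also have "\<dots> = (\<Sum>j\<in>?J0. e j0)" using sep j0 by (intro sum.cong) auto
  also have "\<dots> = of_nat (card ?J0) * e j0" by simp
  also have "\<dots> \<noteq> 0" using assms(1) j0 e[OF j0] by auto
  finally show ?thesis by auto
qed

theorem theorem3p12:
  fixes k :: nat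
    and l0 l1 :: "nat \<Rightarrow> ('n::finite \<Rightarrow>\<^sub>0 nat)"
    and J :: "'j set" and e :: "'j \<Rightarrow> int" and \<alpha> :: "'j \<Rightarrow> ('n \<Rightarrow>\<^sub>0 nat)"
  assumes irred: "\<And>i. i \<in> {1..k} \<Longrightarrow>
      irreducible (Poly_Mapping.single (l0 i) (1::int) - Poly_Mapping.single (l1 i) 1)"
    and distinct: "inj_on (\<lambda>i. Poly_Mapping.single (l0 i) (1::int) - Poly_Mapping.single (l1 i) 1) {1..k}"
    and nz0: "\<And>i. i \<in> {1..k} \<Longrightarrow> l0 i \<noteq> 0"
    and nz1: "\<And>i. i \<in> {1..k} \<Longrightarrow> l1 i \<noteq> 0"
    and finJ: "finite J" and neJ: "J \<noteq> {}"
    and e_pm: "\<And>j. j \<in> J \<Longrightarrow> e j = 1 \<or> e j = -1"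
    and sep: "\<And>j j'. j \<in> J \<Longrightarrow> j' \<in> J \<Longrightarrow> e j \<noteq> e j' \<Longrightarrow> \<alpha> j \<noteq> \<alpha> j'"
  shows "k + 1 \<le> card (minimal_monomials
           ((\<Prod>i=1..k. Poly_Mapping.single (l0 i) (1::int) - Poly_Mapping.single (l1 i) 1)
            * (\<Sum>j\<in>J. Poly_Mapping.single (\<alpha> j) (e j))))"
proof -
  let ?g = "\<Sum>j\<in>J. Poly_Mapping.single (\<alpha> j) (e j)"
  let ?p = "(\<Prod>i=1..k. binom (l0 i) (l1 i)) * ?g"
  have irr: "\<And>i. i \<in> {1..k} \<Longrightarrow> irreducible (binom (l0 i) (l1 i))"
    using irred by (simp add: binom_def)
  have "\<And>i. i \<in> {1..k} \<Longrightarrow> l0 i \<noteq> l1 i" using irreducible_binom_neq[OF irr] by blast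
  moreover have "\<And>i j. i \<in> {1..k} \<Longrightarrow> j \<in> {1..k} \<Longrightarrow>
      (l0 j = l0 i \<and> l1 j = l1 i) \<or> (l0 j = l1 i \<and> l1 j = l0 i) \<or> nonparallel (l0 i) (l1 i) (l0 j) (l1 j)"
    by (rule irreducible_binoms_eq_or_nonparallel[OF irr irr nz0 nz1 nz0 nz1])
  moreover have "?g \<noteq> 0" by (rule sum_single_nonzero[OF finJ neJ e_pm sep])
  ultimately have "1 + card {i\<in>{1..k}. splits pos_weights (l0 i) (l1 i)}
      \<le> card (exposed pos_weights (Poly_Mapping.keys ?p))"
    by (intro card_exposed_prod_binom_mult convex_open_pos_weights pos_weights_nonempty) auto
  also have "{i\<in>{1..k}. splits pos_weights (l0 i) (l1 i)} = {1..k}"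
    using splits_pos_weights[OF irr nz0 nz1] by blast
  also have "card (exposed pos_weights (Poly_Mapping.keys ?p)) \<le> card (minimal_monomials ?p)"
    by (intro card_mono exposed_pos_weights_subset_minimal_monomials)
      (auto intro: finite_subset[of _ "Poly_Mapping.keys ?p"] simp: minimal_monomials_def in_keys_iff)
  finally show ?thesis by (simp add: binom_def)
qed

end
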